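(* Let $S$ be a stable subset of a stable $L^0$-module equipped with a stable topology $\mathscr T$. The following are equivalent: (i) $S$ is stable compact; (ii) every stable ultrafilter on $S$ has a cluster point in $S$; (iii) for every stable collection $\mathscr O$ of stable open sets with $S=\bigcup\mathscr O$ there is a stable finite subcollection $\tilde{\mathscr O}\subset\mathscr O$ with $S=\bigcup\tilde{\mathscr O}$; (iv) every stable collection $\mathscr C$ of stable closed subsets of $S$ such that $\bigcap\tilde{\mathscr C}\neq\emptyset$ for every stable finite subcollection $\tilde{\mathscr C}\subset\mathscr C$ satisfies $\bigcap\mathscr C\neq\emptyset$.
   Context: $L^0$ is the ring of real measurable functions on a probability space $(\Omega,\mathcal F,\mathbb P)$ modulo a.e. equality. An $L^0$-module $E$ is stable if for every countable measurable partition $(A_k)$ of $\Omega$ and $(x_k)\subset E$ there is a unique $x=\sum_k1_{A_k}x_k$ with $1_{A_k}x=1_{A_k}x_k$ for all $k$. A nonempty $S\subset E$ is stable if it contains all such concatenations of its elements. For stable sets $Y_k$, $\sum_k1_{A_k}Y_k:=\{\sum_k1_{A_k}y_k:y_k\in Y_k\}$; a nonempty collection of stable sets is stable if it is closed under this operation. For a nonempty collection $\mathscr X$ of stable sets, $\mathrm{st}(\mathscr X)=\{\sum_j1_{B_j}U_j:U_j\in\mathscr X,(B_j)\text{ countable measurable partition}\}$; a subcollection $\tilde{\mathscr O}$ of a stable collection $\mathscr O$ is stable finite if $\tilde{\mathscr O}=\{\sum_k1_{A_k}V_k:V_k\in\mathrm{st}(\mathscr O_k)\}$ for a countable measurable partition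 $(A_k)$ and finite nonempty $\mathscr O_k\subset\mathscr O$. A topology on $S$ is stable if it has a base which is a stable collection of stable sets. A filter on $S$ is stable if it has a filter base which is a stable collection of stable sets; a stable ultrafilter is a maximal stable filter. $S$ is stable compact if every stable filter on $S$ has a cluster point in $S$. *)

theory Defs
  imports "HOL-Probability.Probability"
begin

text \<open>Elements of L0 are represented by real-valued measurable functions on the
probability space M; scalar multiplication must respect a.e. equality, so that it
descends to the quotient ring L0.\<close>

definition L0 :: "'w measure \<Rightarrow> ('w \<Rightarrow> real) set" where
  "L0 M = borel_measurable M"

definition L0_module ::
  "'w measure \<Rightarrow> 'e set \<Rightarrow> 'e \<Rightarrow> ('e \<Rightarrow> 'e \<Rightarrow> 'e) \<Rightarrow> (('w \<Rightarrow> real) \<Rightarrow> 'e \<Rightarrow> 'e) \<Rightarrow> bool" where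
  "L0_module M E zero add smul \<longleftrightarrow>
     zero \<in> E \<and> (\<forall>x\<in>E. \<forall>y\<in>E. add x y \<in> E) \<and> (\<forall>f\<in>L0 M. \<forall>x\<in>E. smul f x \<in> E) \<and>
     (\<forall>x\<in>E. \<forall>y\<in>E. \<forall>z\<in>E. add (add x y) z = add x (add y z)) \<and>
     (\<forall>x\<in>E. \<forall>y\<in>E. add x y = add y x) \<and>
     (\<forall>x\<in>E. add zero x = x) \<and>
     (\<forall>x\<in>E. \<exists>y\<in>E. add x y = zero) \<and>
     (\<forall>f\<in>L0 M. \<forall>x\<in>E. \<forall>y\<in>E. smul f (add x y) = add (smul f x) (smul f y)) \<and>
     (\<forall>f\<in>L0 M. \<forall>g\<in>L0 M. \<forall>x\<in>E. smul (\<lambda>w. f w + g w) x = add (smul f x) (smul g x)) \<and>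
     (\<forall>f\<in>L0 M. \<forall>g\<in>L0 M. \<forall>x\<in>E. smul (\<lambda>w. f w * g w) x = smul f (smul g x)) \<and>
     (\<forall>x\<in>E. smul (\<lambda>w. 1) x = x) \<and>
     (\<forall>f\<in>L0 M. \<forall>g\<in>L0 M. \<forall>x\<in>E. (AE w in M. f w = g w) \<longrightarrow> smul f x = smul g x)"

text \<open>Countable measurable partitions, indexed by nat (finite partitions are
included by allowing empty members).\<close>

definition meas_partition :: "'w measure \<Rightarrow> (nat \<Rightarrow> 'w set) \<Rightarrow> bool" where
  "meas_partition M A \<longleftrightarrow>
     (\<forall>k. A k \<in> sets M) \<and> disjoint_family A \<and> (\<Union>k. A k) = space M"

definition stable_module ::
  "'w measure \<Rightarrow> 'e set \<Rightarrow> 'e \<Rightarrow> ('e \<Rightarrow> 'e \<Rightarrow> 'e) \<Rightarrow> (('w \<Rightarrow> real) \<Rightarrow> 'e \<Rightarrow> 'e) \<Rightarrow> bool" where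
  "stable_module M E zero add smul \<longleftrightarrow> L0_module M E zero add smul \<and>
     (\<forall>A xs. meas_partition M A \<and> (\<forall>k. xs k \<in> E) \<longrightarrow>
        (\<exists>!x. x \<in> E \<and> (\<forall>k. smul (indicator (A k)) x = smul (indicator (A k)) (xs k))))"

text \<open>The concatenation sum_k 1_{A_k} x_k.\<close>

definition conc :: "'e set \<Rightarrow> (('w \<Rightarrow> real) \<Rightarrow> 'e \<Rightarrow> 'e) \<Rightarrow> (nat \<Rightarrow> 'w set) \<Rightarrow> (nat \<Rightarrow> 'e) \<Rightarrow> 'e" where
  "conc E smul A xs =
     (THE x. x \<in> E \<and> (\<forall>k. smul (indicator (A k)) x = smul (indicator (A k)) (xs k)))"

definition stable_set :: "'w measure \<Rightarrow> 'e set \<Rightarrow> (('w \<Rightarrow> real) \<Rightarrow> 'e \<Rightarrow> 'e) \<Rightarrow> 'e set \<Rightarrow> bool" where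
  "stable_set M E smul S \<longleftrightarrow> S \<noteq> {} \<and> S \<subseteq> E \<and>
     (\<forall>A xs. meas_partition M A \<and> (\<forall>k. xs k \<in> S) \<longrightarrow> conc E smul A xs \<in> S)"

definition conc_sets :: "'e set \<Rightarrow> (('w \<Rightarrow> real) \<Rightarrow> 'e \<Rightarrow> 'e) \<Rightarrow> (nat \<Rightarrow> 'w set) \<Rightarrow> (nat \<Rightarrow> 'e set) \<Rightarrow> 'e set" where
  "conc_sets E smul A Y = {conc E smul A ys | ys. \<forall>k. ys k \<in> Y k}"

definition stable_coll :: "'w measure \<Rightarrow> 'e set \<Rightarrow> (('w \<Rightarrow> real) \<Rightarrow> 'e \<Rightarrow> 'e) \<Rightarrow> 'e set set \<Rightarrow> bool" where
  "stable_coll M E smul \<X> \<longleftrightarrow> \<X> \<noteq> {} \<and> (\<forall>X\<in>\<X>. stable_set M E smul X) \<and>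
     (\<forall>A Y. meas_partition M A \<and> (\<forall>k. Y k \<in> \<X>) \<longrightarrow> conc_sets E smul A Y \<in> \<X>)"

definition st :: "'w measure \<Rightarrow> 'e set \<Rightarrow> (('w \<Rightarrow> real) \<Rightarrow> 'e \<Rightarrow> 'e) \<Rightarrow> 'e set set \<Rightarrow> 'e set set" where
  "st M E smul \<X> = {conc_sets E smul B U | B U. meas_partition M B \<and> (\<forall>j. U j \<in> \<X>)}"

definition stable_finite_sub ::
  "'w measure \<Rightarrow> 'e set \<Rightarrow> (('w \<Rightarrow> real) \<Rightarrow> 'e \<Rightarrow> 'e) \<Rightarrow> 'e set set \<Rightarrow> 'e set set \<Rightarrow> bool" where
  "stable_finite_sub M E smul \<O> \<O>' \<longleftrightarrow> \<O>' \<subseteq> \<O> \<and>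
     (\<exists>A Os. meas_partition M A \<and> (\<forall>k. finite (Os k) \<and> Os k \<noteq> {} \<and> Os k \<subseteq> \<O>) \<and>
        \<O>' = {conc_sets E smul A V | V. \<forall>k. V k \<in> st M E smul (Os k)})"

definition stable_topology ::
  "'w measure \<Rightarrow> 'e set \<Rightarrow> (('w \<Rightarrow> real) \<Rightarrow> 'e \<Rightarrow> 'e) \<Rightarrow> 'e topology \<Rightarrow> bool" where
  "stable_topology M E smul T \<longleftrightarrow>
     (\<exists>\<B>. stable_coll M E smul \<B> \<and> (\<forall>B\<in>\<B>. openin T B) \<and>
        (\<forall>U. openin T U \<longrightarrow> (\<exists>\<U>\<subseteq>\<B>. U = \<Union>\<U>)))"

definition filter_on :: "'e set \<Rightarrow> 'e set set \<Rightarrow> bool" where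
  "filter_on S \<F> \<longleftrightarrow> S \<in> \<F> \<and> {} \<notin> \<F> \<and> (\<forall>F\<in>\<F>. F \<subseteq> S) \<and>
     (\<forall>F\<in>\<F>. \<forall>G\<in>\<F>. F \<inter> G \<in> \<F>) \<and>
     (\<forall>F\<in>\<F>. \<forall>G. F \<subseteq> G \<and> G \<subseteq> S \<longrightarrow> G \<in> \<F>)"

definition filter_base :: "'e set set \<Rightarrow> 'e set set \<Rightarrow> bool" where
  "filter_base \<F> \<B> \<longleftrightarrow> \<B> \<subseteq> \<F> \<and> (\<forall>F\<in>\<F>. \<exists>B\<in>\<B>. B \<subseteq> F)"

definition stable_filter ::
  "'w measure \<Rightarrow> 'e set \<Rightarrow> (('w \<Rightarrow> real) \<Rightarrow> 'e \<Rightarrow> 'e) \<Rightarrow> 'e set \<Rightarrow> 'e set set \<Rightarrow> bool" where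
  "stable_filter M E smul S \<F> \<longleftrightarrow> filter_on S \<F> \<and>
     (\<exists>\<B>. stable_coll M E smul \<B> \<and> filter_base \<F> \<B>)"

definition stable_ultrafilter ::
  "'w measure \<Rightarrow> 'e set \<Rightarrow> (('w \<Rightarrow> real) \<Rightarrow> 'e \<Rightarrow> 'e) \<Rightarrow> 'e set \<Rightarrow> 'e set set \<Rightarrow> bool" where
  "stable_ultrafilter M E smul S \<F> \<longleftrightarrow> stable_filter M E smul S \<F> \<and>
     (\<forall>\<G>. stable_filter M E smul S \<G> \<and> \<F> \<subseteq> \<G> \<longrightarrow> \<G> = \<F>)"

definition cluster_point :: "'e topology \<Rightarrow> 'e set set \<Rightarrow> 'e \<Rightarrow> bool" where
  "cluster_point T \<F> x \<longleftrightarrow> x \<in> topspace T \<and>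
     (\<forall>U F. openin T U \<and> x \<in> U \<and> F \<in> \<F> \<longrightarrow> U \<inter> F \<noteq> {})"

definition stable_compact ::
  "'w measure \<Rightarrow> 'e set \<Rightarrow> (('w \<Rightarrow> real) \<Rightarrow> 'e \<Rightarrow> 'e) \<Rightarrow> 'e topology \<Rightarrow> 'e set \<Rightarrow> bool" where
  "stable_compact M E smul T S \<longleftrightarrow>
     (\<forall>\<F>. stable_filter M E smul S \<F> \<longrightarrow> (\<exists>x\<in>S. cluster_point T \<F> x))"

end

theory Submission
  imports Defs
begin

text \<open>All notions are local in the probability space: an element of E, and membership in a
  stable set, are determined piecewise along countable measurable partitions, and elements can be
  glued along such partitions. The classical proofs then go through with finite subcovers and finite
  intersections replaced by their stable versions, once each pointwise contradiction is localized.
  The localization rests on exhaustion: a property that can be glued along countable unions has an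
  essentially largest set H where it holds, and one argues on the complement of H.

  For (iii) \<Longrightarrow> (i), if a stable filter has no cluster point, the complement Q of the largest set
  carrying a local cluster point is not null, and every point has a basic neighbourhood that on Q
  is apart from some member of the filter base; these neighbourhoods form a stable open cover, and
  a stable finite subcover of it contradicts the filter property. For (i) \<Longrightarrow> (iii), if no stable
  finite subcover exists, the points that on Q avoid a given stable finite subcollection form stable
  sets generating a stable filter, and its cluster point cannot lie in any member of the cover.
  (ii) \<Longrightarrow> (i) is Zorn's lemma for stable filters, and (i) \<Longleftrightarrow> (iv) passes to closures, which
  commute with concatenation.\<close>

lemma filter_on_subset: "filter_on S \<F> \<Longrightarrow> X \<in> \<F> \<Longrightarrow> X \<subseteq> S"
  unfolding filter_on_def by blast

lemma filter_on_Int: "filter_on S \<F> \<Longrightarrow> X \<in> \<F> \<Longrightarrow> Y \<in> \<F> \<Longrightarrow> X \<inter> Y \<in> \<F>"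
  unfolding filter_on_def by blast

lemma filter_on_Inter:
  assumes F: "filter_on S \<F>" and "finite \<X>" "\<X> \<noteq> {}" "\<X> \<subseteq> \<F>"
  shows "\<Inter>\<X> \<in> \<F>"
  using assms(2-4)
proof (induction \<X> rule: finite_ne_induct)
  case (insert X \<X>)
  then show ?case using filter_on_Int[OF F] by simp
qed simp

lemma cluster_point_antimono: "\<F> \<subseteq> \<G> \<Longrightarrow> cluster_point T \<G> x \<Longrightarrow> cluster_point T \<F> x"
  unfolding cluster_point_def by blast

section \<open>Exhaustion\<close>

context finite_measure
begin

lemma exists_ess_max_set:
  assumes P0: "P {}"
    and PU: "\<And>D :: nat \<Rightarrow> 'a set. (\<And>n. D n \<in> sets M) \<Longrightarrow> (\<And>n. P (D n)) \<Longrightarrow> P (\<Union>n. D n)"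
  shows "\<exists>H\<in>sets M. P H \<and> (\<forall>D\<in>sets M. P D \<longrightarrow> D - H \<in> null_sets M)"
proof -
  define \<F> where "\<F> = {D \<in> sets M. P D}"
  have un: "(\<Union>n. D n) \<in> \<F>" if "\<And>n. D n \<in> \<F>" for D :: "nat \<Rightarrow> 'a set"
    using PU that unfolding \<F>_def by blast
  define s where "s = (SUP D\<in>\<F>. measure M D)"
  have ne: "\<F> \<noteq> {}" using P0 unfolding \<F>_def by blast
  have bdd: "bdd_above (measure M ` \<F>)" by (auto intro!: bdd_aboveI[of _ "measure M (space M)"] bounded_measure)
  have le: "\<And>D. D \<in> \<F> \<Longrightarrow> measure M D \<le> s" unfolding s_def using bdd by (auto intro: cSUP_upper)
  have "\<forall>n::nat. \<exists>D\<in>\<F>. s - 1 / (real n + 1) < measure M D"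
  proof
    fix n :: nat
    have "s - 1 / (real n + 1) < s" by simp
    then show "\<exists>D\<in>\<F>. s - 1 / (real n + 1) < measure M D"
      unfolding s_def using ne bdd by (simp add: less_cSUP_iff)
  qed
  then obtain D where D: "\<And>n. D n \<in> \<F>" "\<And>n. s - 1 / (real n + 1) < measure M (D n)" by metis
  define H where "H = (\<Union>n. D n)"
  have H: "H \<in> \<F>" using un D H_def by blast
  have Hs: "H \<in> sets M" using H unfolding \<F>_def by blast
  have mH: "measure M H = s"
  proof (rule antisym)
    show "measure M H \<le> s" using le H .
    show "s \<le> measure M H"
    proof (rule field_le_epsilon)
      fix e :: real assume e: "0 < e"
      obtain n :: nat where n: "1 / (real n + 1) < e"
        using e by (metis nat_approx_posE of_nat_Suc add.commute)
      have "measure M (D n) \<le> measure M H"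
        using D(1) Hs unfolding \<F>_def by (intro finite_measure_mono) (auto simp: H_def)
      then show "s \<le> measure M H + e" using D(2)[of n] n by linarith
    qed
  qed
  have "G - H \<in> null_sets M" if G: "G \<in> \<F>" for G
  proof -
    have Gs: "G \<in> sets M" using G unfolding \<F>_def by blast
    have "(\<Union>n::nat. if n = 0 then G else H) \<in> \<F>" by (rule un) (use G H in simp)
    moreover have "(\<Union>n::nat. if n = 0 then G else H) = G \<union> H" by (auto split: if_splits)
    ultimately have "measure M (G \<union> H) \<le> s" using le by simp
    moreover have "measure M (G \<union> H) = measure M H + measure M (G - H)"
      using Gs Hs by (subst finite_measure_Union[symmetric]) (auto intro!: arg_cong[where f="measure M"])
    ultimately have "measure M (G - H) = 0" using mH measure_nonneg[of M "G - H"] by linarith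
    then show "G - H \<in> null_sets M" using Gs Hs by (intro null_setsI) (auto simp: emeasure_eq_measure)
  qed
  then show ?thesis using H unfolding \<F>_def by blast
qed

lemma ess_local_dichotomy:
  assumes P0: "P {}"
    and PU: "\<And>D :: nat \<Rightarrow> 'a set. (\<And>n. D n \<in> sets M) \<Longrightarrow> (\<And>n. P (D n)) \<Longrightarrow> P (\<Union>n. D n)"
    and P_ae: "\<And>D D'. D \<in> sets M \<Longrightarrow> D' \<in> sets M \<Longrightarrow> P D \<Longrightarrow> D' - D \<in> null_sets M \<Longrightarrow> P D'"
    and L: "L \<in> sets M"
  shows "P L \<or> (\<exists>Z\<in>sets M. Z \<subseteq> L \<and> Z \<notin> null_sets M \<and>
                    (\<forall>D\<in>sets M. D \<subseteq> Z \<longrightarrow> P D \<longrightarrow> D \<in> null_sets M))"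
proof -
  obtain H where H: "H \<in> sets M" "P H" "\<And>D. D \<in> sets M \<Longrightarrow> P D \<Longrightarrow> D - H \<in> null_sets M"
    using exists_ess_max_set[OF P0 PU] by blast
  show ?thesis
  proof (cases "L - H \<in> null_sets M")
    case True
    then show ?thesis using P_ae[OF H(1) L H(2)] by blast
  next
    case False
    have "D \<in> null_sets M" if "D \<in> sets M" "D \<subseteq> L - H" "P D" for D
    proof -
      have "D - H = D" using that(2) by blast
      then show ?thesis using H(3)[OF that(1,3)] by simp
    qed
    then show ?thesis using False L H(1) by (intro disjI2 bexI[of _ "L - H"]) auto
  qed
qed

end

section \<open>Agreement and concatenation in a stable module\<close>

locale stable_L0_module = prob_space M for M :: "'w measure" +
  fixes E :: "'e set" and zero :: 'e and add :: "'e \<Rightarrow> 'e \<Rightarrow> 'e"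
    and smul :: "('w \<Rightarrow> real) \<Rightarrow> 'e \<Rightarrow> 'e"
  assumes stable_module: "stable_module M E zero add smul"
begin

abbreviation restr :: "'w set \<Rightarrow> 'e \<Rightarrow> 'e" where
  "restr A x \<equiv> smul (indicator A) x"

definition agree_on :: "'w set \<Rightarrow> 'e \<Rightarrow> 'e \<Rightarrow> bool" where
  "agree_on D x y \<longleftrightarrow> restr D x = restr D y"

lemma L0_module: "L0_module M E zero add smul"
  using stable_module unfolding stable_module_def by blast

lemma module_axioms:
  "\<forall>f\<in>L0 M. \<forall>x\<in>E. smul f x \<in> E"
  "\<forall>x\<in>E. \<forall>y\<in>E. \<forall>z\<in>E. add (add x y) z = add x (add y z)"
  "\<forall>x\<in>E. \<forall>y\<in>E. add x y = add y x"
  "\<forall>x\<in>E. add zero x = x"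
  "\<forall>x\<in>E. \<exists>y\<in>E. add x y = zero"
  "\<forall>f\<in>L0 M. \<forall>g\<in>L0 M. \<forall>x\<in>E. smul (\<lambda>w. f w + g w) x = add (smul f x) (smul g x)"
  "\<forall>f\<in>L0 M. \<forall>g\<in>L0 M. \<forall>x\<in>E. smul (\<lambda>w. f w * g w) x = smul f (smul g x)"
  "\<forall>x\<in>E. smul (\<lambda>w. 1) x = x"
  "\<forall>f\<in>L0 M. \<forall>g\<in>L0 M. \<forall>x\<in>E. (AE w in M. f w = g w) \<longrightarrow> smul f x = smul g x"
  "zero \<in> E"
  by (insert L0_module[unfolded L0_module_def]) (elim conjE; assumption)+

lemma indicator_in_L0: "A \<in> sets M \<Longrightarrow> indicator A \<in> L0 M"
  unfolding L0_def by simp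

lemma restr_in_carrier: "A \<in> sets M \<Longrightarrow> x \<in> E \<Longrightarrow> restr A x \<in> E"
  using module_axioms(1) indicator_in_L0 by blast

lemma smul_const_zero:
  assumes x: "x \<in> E"
  shows "smul (\<lambda>_. 0) x = zero"
proof -
  let ?z = "smul (\<lambda>_. 0) x"
  have L: "(\<lambda>_. 0::real) \<in> L0 M" unfolding L0_def by simp
  have z: "?z \<in> E" using module_axioms(1) L x by blast
  have "smul (\<lambda>w. 0 + 0) x = add ?z ?z"
    using module_axioms(6)[rule_format, OF L L x] by simp
  then have double: "add ?z ?z = ?z" by simp
  obtain t where t: "t \<in> E" "add ?z t = zero" using module_axioms(5) z by blast
  have "zero = add (add ?z ?z) t" using t by (simp only: double)
  also have "\<dots> = add ?z zero" using module_axioms(2) z t by simp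
  also have "\<dots> = ?z" using module_axioms(3)[rule_format, OF z module_axioms(10)] module_axioms(4) z by simp
  finally show ?thesis ..
qed

lemma restr_space: "x \<in> E \<Longrightarrow> restr (space M) x = x"
proof -
  assume x: "x \<in> E"
  have "restr (space M) x = smul (\<lambda>_. 1) x"
    using module_axioms(9) indicator_in_L0[OF sets.top] x by (auto simp: L0_def intro!: AE_I2)
  then show ?thesis using module_axioms(8) x by simp
qed

lemma restr_null: "A \<in> null_sets M \<Longrightarrow> x \<in> E \<Longrightarrow> restr A x = zero"
proof -
  assume A: "A \<in> null_sets M" and x: "x \<in> E"
  have "AE w in M. indicator A w = (0::real)"
    using AE_not_in[OF A] by eventually_elim simp
  then have "restr A x = smul (\<lambda>_. 0) x"
    using module_axioms(9) indicator_in_L0 A x unfolding L0_def by auto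
  then show ?thesis using smul_const_zero x by simp
qed

lemma restr_restr:
  "A \<in> sets M \<Longrightarrow> B \<in> sets M \<Longrightarrow> x \<in> E \<Longrightarrow> restr A (restr B x) = restr (A \<inter> B) x"
proof -
  assume A: "A \<in> sets M" and B: "B \<in> sets M" and x: "x \<in> E"
  have "restr A (restr B x) = smul (\<lambda>w. indicator A w * indicator B w) x"
    using module_axioms(7) indicator_in_L0[OF A] indicator_in_L0[OF B] x by simp
  also have "(\<lambda>w. indicator A w * indicator B w) = (indicator (A \<inter> B) :: 'w \<Rightarrow> real)"
    by (auto simp: indicator_inter_arith)
  finally show ?thesis .
qed

lemma agree_on_refl [simp]: "agree_on D x x"
  unfolding agree_on_def by simp

lemma agree_on_commute: "agree_on D x y \<longleftrightarrow> agree_on D y x"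
  unfolding agree_on_def by auto

lemma agree_on_trans: "agree_on D x y \<Longrightarrow> agree_on D y z \<Longrightarrow> agree_on D x z"
  unfolding agree_on_def by simp

lemma agree_on_subset:
  "agree_on D x y \<Longrightarrow> D' \<subseteq> D \<Longrightarrow> D \<in> sets M \<Longrightarrow> D' \<in> sets M \<Longrightarrow> x \<in> E \<Longrightarrow> y \<in> E
   \<Longrightarrow> agree_on D' x y"
  unfolding agree_on_def by (metis restr_restr Int_absorb2)

lemma agree_on_null: "D \<in> null_sets M \<Longrightarrow> x \<in> E \<Longrightarrow> y \<in> E \<Longrightarrow> agree_on D x y"
  unfolding agree_on_def using restr_null by simp

lemma agree_on_empty: "x \<in> E \<Longrightarrow> y \<in> E \<Longrightarrow> agree_on {} x y"
  by (rule agree_on_null) simp_all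

lemma meas_partition_sets: "meas_partition M A \<Longrightarrow> A k \<in> sets M"
  unfolding meas_partition_def by blast

lemma conc_unique:
  "meas_partition M A \<Longrightarrow> (\<And>k. xs k \<in> E) \<Longrightarrow>
   \<exists>!x. x \<in> E \<and> (\<forall>k. agree_on (A k) x (xs k))"
  using conjunct2[OF stable_module[unfolded stable_module_def]] unfolding agree_on_def by simp

lemma conc_spec:
  assumes "meas_partition M A" "\<And>k. xs k \<in> E"
  shows "conc E smul A xs \<in> E \<and> (\<forall>k. agree_on (A k) (conc E smul A xs) (xs k))"
  using theI'[OF conc_unique[OF assms]] unfolding conc_def agree_on_def .

lemma conc_in_carrier: "meas_partition M A \<Longrightarrow> (\<And>k. xs k \<in> E) \<Longrightarrow> conc E smul A xs \<in> E"
  using conc_spec by blast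

lemma agree_on_conc:
  "meas_partition M A \<Longrightarrow> (\<And>k. xs k \<in> E) \<Longrightarrow> agree_on (A k) (conc E smul A xs) (xs k)"
  using conc_spec by blast

lemma eq_if_agree_on_partition:
  assumes "meas_partition M A" "x \<in> E" "y \<in> E" "\<And>k. agree_on (A k) x y"
  shows "x = y"
proof -
  have "\<exists>!z. z \<in> E \<and> (\<forall>k. agree_on (A k) z y)"
    using conc_unique[OF assms(1), of "\<lambda>_. y"] assms(3) by simp
  then show ?thesis using assms(2-4) by (metis agree_on_refl)
qed

lemma conc_const: "meas_partition M A \<Longrightarrow> x \<in> E \<Longrightarrow> conc E smul A (\<lambda>_. x) = x"
  using eq_if_agree_on_partition conc_in_carrier agree_on_conc by metis

lemma stable_set_carrier: "stable_set M E smul E"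
  using module_axioms(10) conc_in_carrier unfolding stable_set_def by blast

lemma stable_set_subset: "stable_set M E smul V \<Longrightarrow> V \<subseteq> E"
  unfolding stable_set_def by blast

lemma stable_set_nonempty: "stable_set M E smul V \<Longrightarrow> V \<noteq> {}"
  unfolding stable_set_def by blast

lemma stable_set_conc:
  "stable_set M E smul V \<Longrightarrow> meas_partition M A \<Longrightarrow> (\<And>k. xs k \<in> V) \<Longrightarrow> conc E smul A xs \<in> V"
  unfolding stable_set_def by blast

lemma null_sets_if_null_on_cover:
  fixes C :: "nat \<Rightarrow> 'w set"
  assumes "D \<subseteq> (\<Union>n. C n)" and "\<And>n. D \<inter> C n \<in> null_sets M"
  shows "D \<in> null_sets M"
proof -
  have "D = (\<Union>n. D \<inter> C n)" using assms(1) by blast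
  also have "\<dots> \<in> null_sets M" using assms(2) by (rule null_sets_UN)
  finally show ?thesis .
qed

lemma null_sets_if_null_on_partition:
  assumes "meas_partition M A" "D \<in> sets M" "\<And>k. D \<inter> A k \<in> null_sets M"
  shows "D \<in> null_sets M"
proof (rule null_sets_if_null_on_cover)
  show "D \<subseteq> (\<Union>k. A k)"
    using assms(1,2) sets.sets_into_space unfolding meas_partition_def by blast
qed (rule assms(3))

definition seq_partition :: "(nat \<Rightarrow> 'w set) \<Rightarrow> nat \<Rightarrow> 'w set" where
  "seq_partition D n = (if n = 0 then space M - (\<Union>i. D i) else disjointed D (n - 1))"

lemma seq_partition_0 [simp]: "seq_partition D 0 = space M - (\<Union>i. D i)"
  and seq_partition_Suc [simp]: "seq_partition D (Suc n) = disjointed D n"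
  by (simp_all add: seq_partition_def)

lemma meas_partition_seq_partition:
  assumes D: "\<And>n. D n \<in> sets M"
  shows "meas_partition M (seq_partition D)"
proof -
  have "range (disjointed D) \<subseteq> sets M" using D by (intro sets.range_disjointed_sets) auto
  then have sets: "seq_partition D k \<in> sets M" for k
    using D by (cases k) auto
  have "disjoint_family (seq_partition D)"
    unfolding disjoint_family_on_def
  proof (intro ballI impI)
    fix m n :: nat assume "m \<noteq> n"
    show "seq_partition D m \<inter> seq_partition D n = {}"
    proof (cases m; cases n)
      fix m' n' assume "m = Suc m'" "n = Suc n'"
      then show ?thesis using disjoint_family_disjointed[of D] \<open>m \<noteq> n\<close>
        by (simp add: disjoint_family_on_def)
    qed (use \<open>m \<noteq> n\<close> disjointed_subset[of D] in auto)
  qed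
  moreover have "space M \<subseteq> (\<Union>k. seq_partition D k)"
  proof
    fix w assume w: "w \<in> space M"
    show "w \<in> (\<Union>k. seq_partition D k)"
    proof (cases "w \<in> (\<Union>i. D i)")
      case True
      then obtain n where "w \<in> disjointed D n" using UN_disjointed_eq[of D] by blast
      then show ?thesis by (intro UN_I[of "Suc n"]) simp_all
    next
      case False
      then show ?thesis using w by (intro UN_I[of 0]) simp_all
    qed
  qed
  then have "(\<Union>k. seq_partition D k) = space M"
    using sets sets.sets_into_space by blast
  ultimately show ?thesis using sets unfolding meas_partition_def by blast
qed

definition bipartition :: "'w set \<Rightarrow> nat \<Rightarrow> 'w set" where
  "bipartition D = seq_partition (\<lambda>_. D)"

lemma bipartition_0 [simp]: "bipartition D 0 = space M - D"
  and bipartition_1 [simp]: "bipartition D (Suc 0) = D"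
  and bipartition_Suc_Suc [simp]: "bipartition D (Suc (Suc n)) = {}"
  by (simp_all add: bipartition_def disjointed_def)

lemma meas_partition_bipartition: "D \<in> sets M \<Longrightarrow> meas_partition M (bipartition D)"
  unfolding bipartition_def by (rule meas_partition_seq_partition)

lemma agree_on_Union:
  fixes D :: "nat \<Rightarrow> 'w set"
  assumes D: "\<And>n. D n \<in> sets M" and x: "x \<in> E" and y: "y \<in> E"
    and agree: "\<And>n. agree_on (D n) x y"
  shows "agree_on (\<Union>n. D n) x y"
proof -
  define U where "U = (\<Union>n. D n)"
  have U: "U \<in> sets M" using D unfolding U_def by blast
  have P: "meas_partition M (seq_partition D)" by (rule meas_partition_seq_partition[OF D])
  have "agree_on (seq_partition D k) (restr U x) (restr U y)" for k
  proof -
    have Pk: "seq_partition D k \<in> sets M" by (rule meas_partition_sets[OF P])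
    show ?thesis
    proof (cases k)
      case 0
      then have "seq_partition D k \<inter> U = {}" unfolding U_def by auto
      then show ?thesis
        unfolding agree_on_def restr_restr[OF Pk U x] restr_restr[OF Pk U y]
        using restr_null[of "{}"] x y by simp
    next
      case (Suc n)
      then have sub: "seq_partition D k \<subseteq> D n" using disjointed_subset[of D n] by simp
      then have "seq_partition D k \<inter> U = seq_partition D k" unfolding U_def by blast
      then show ?thesis
        using agree_on_subset[OF agree sub D Pk x y]
        unfolding agree_on_def restr_restr[OF Pk U x] restr_restr[OF Pk U y] by simp
    qed
  qed
  then have "restr U x = restr U y"
    by (rule eq_if_agree_on_partition[OF P restr_in_carrier[OF U x] restr_in_carrier[OF U y]])
  then show ?thesis unfolding agree_on_def U_def .
qed

lemma agree_on_Un: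
  assumes A: "A \<in> sets M" and B: "B \<in> sets M" and xy: "x \<in> E" "y \<in> E"
    and "agree_on A x y" "agree_on B x y"
  shows "agree_on (A \<union> B) x y"
proof -
  define D where "D n = (if n = 0 then A else B)" for n :: nat
  have "agree_on (\<Union>n. D n) x y"
    by (rule agree_on_Union) (use assms in \<open>simp_all add: D_def\<close>)
  moreover have "(\<Union>n. D n) = A \<union> B" unfolding D_def by (auto split: if_splits)
  ultimately show ?thesis by simp
qed

lemma agree_on_ae_superset:
  assumes xy: "agree_on D x y" and D: "D \<in> sets M" and D': "D' \<in> sets M"
    and null: "D' - D \<in> null_sets M" and "x \<in> E" "y \<in> E"
  shows "agree_on D' x y"
proof -
  have "agree_on (D' \<inter> D) x y"
    by (rule agree_on_subset[OF xy]) (use assms in auto)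
  moreover have "agree_on (D' - D) x y" by (rule agree_on_null[OF null]) fact+
  ultimately have "agree_on ((D' \<inter> D) \<union> (D' - D)) x y"
    using assms by (intro agree_on_Un) auto
  moreover have "(D' \<inter> D) \<union> (D' - D) = D'" by blast
  ultimately show ?thesis by simp
qed

lemma eq_if_agree_on_ae:
  assumes "agree_on D x y" "D \<in> sets M" "space M - D \<in> null_sets M" "x \<in> E" "y \<in> E"
  shows "x = y"
  using agree_on_ae_superset[OF assms(1,2) sets.top assms(3-5)] restr_space assms(4,5)
  unfolding agree_on_def by metis

lemma conc_mem_conc_sets: "(\<And>k. xs k \<in> Y k) \<Longrightarrow> conc E smul A xs \<in> conc_sets E smul A Y"
  unfolding conc_sets_def by blast

lemma conc_sets_mono: "(\<And>k. Y k \<subseteq> Y' k) \<Longrightarrow> conc_sets E smul A Y \<subseteq> conc_sets E smul A Y'"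
  unfolding conc_sets_def by blast

lemma mem_conc_sets:
  assumes A: "meas_partition M A" and Y: "\<And>k. Y k \<subseteq> E"
  shows "x \<in> conc_sets E smul A Y \<longleftrightarrow> x \<in> E \<and> (\<forall>k. \<exists>y\<in>Y k. agree_on (A k) x y)"
proof
  assume "x \<in> conc_sets E smul A Y"
  then obtain ys where ys: "\<And>k. ys k \<in> Y k" and x: "x = conc E smul A ys"
    unfolding conc_sets_def by blast
  have "\<And>k. ys k \<in> E" using ys Y by blast
  then show "x \<in> E \<and> (\<forall>k. \<exists>y\<in>Y k. agree_on (A k) x y)"
    using conc_in_carrier[OF A] agree_on_conc[OF A] ys unfolding x by blast
next
  assume x: "x \<in> E \<and> (\<forall>k. \<exists>y\<in>Y k. agree_on (A k) x y)"
  then obtain ys where ys: "\<And>k. ys k \<in> Y k" "\<And>k. agree_on (A k) x (ys k)" by metis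
  have ysE: "\<And>k. ys k \<in> E" using ys(1) Y by blast
  have "x = conc E smul A ys"
  proof (rule eq_if_agree_on_partition[OF A _ conc_in_carrier[OF A ysE]])
    fix k show "agree_on (A k) x (conc E smul A ys)"
      using ys(2) agree_on_conc[OF A ysE] unfolding agree_on_def by simp
  qed (use x in blast)
  then show "x \<in> conc_sets E smul A Y" using conc_mem_conc_sets ys(1) by blast
qed

lemma conc_sets_subset_carrier:
  "meas_partition M A \<Longrightarrow> (\<And>k. Y k \<subseteq> E) \<Longrightarrow> conc_sets E smul A Y \<subseteq> E"
  using mem_conc_sets by blast

lemma mem_stable_set_if_local:
  assumes V: "stable_set M E smul V" and A: "meas_partition M A" and x: "x \<in> E"
    and local: "\<And>k. \<exists>v\<in>V. agree_on (A k) x v"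
  shows "x \<in> V"
proof -
  have "x \<in> conc_sets E smul A (\<lambda>_. V)"
    using mem_conc_sets[OF A stable_set_subset[OF V]] x local by blast
  then show ?thesis unfolding conc_sets_def using stable_set_conc[OF V A] by blast
qed

lemma conc_sets_const:
  assumes V: "stable_set M E smul V" and A: "meas_partition M A"
  shows "conc_sets E smul A (\<lambda>_. V) = V"
proof
  show "conc_sets E smul A (\<lambda>_. V) \<subseteq> V"
    unfolding conc_sets_def using stable_set_conc[OF V A] by blast
  show "V \<subseteq> conc_sets E smul A (\<lambda>_. V)"
  proof
    fix x assume "x \<in> V"
    then show "x \<in> conc_sets E smul A (\<lambda>_. V)"
      using mem_conc_sets[OF A stable_set_subset[OF V]] stable_set_subset[OF V] agree_on_refl by blast
  qed
qed

lemma subset_conc_sets_const: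
  assumes "W \<subseteq> E" "meas_partition M A"
  shows "W \<subseteq> conc_sets E smul A (\<lambda>_. W)"
proof
  fix w assume "w \<in> W"
  then show "w \<in> conc_sets E smul A (\<lambda>_. W)"
    using assms by (subst mem_conc_sets) (auto intro: bexI[of _ w])
qed

lemma agree_on_by_partition:
  assumes B: "meas_partition M B" and D: "D \<in> sets M" and x: "x \<in> E" and y: "y \<in> E"
    and agree: "\<And>n. agree_on (D \<inter> B n) x y"
  shows "agree_on D x y"
proof -
  have "agree_on (\<Union>n. D \<inter> B n) x y"
    by (rule agree_on_Union[OF _ x y agree]) (use D meas_partition_sets[OF B] in blast)
  moreover have "(\<Union>n. D \<inter> B n) = D"
    using B sets.sets_into_space[OF D] unfolding meas_partition_def by blast
  ultimately show ?thesis by simp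
qed

lemma agree_on_conc_conc:
  assumes B: "meas_partition M B" and D: "D \<in> sets M"
    and xs: "\<And>n. xs n \<in> E" and ys: "\<And>n. ys n \<in> E"
    and agree: "\<And>n. agree_on (D \<inter> B n) (xs n) (ys n)"
  shows "agree_on D (conc E smul B xs) (conc E smul B ys)"
proof (rule agree_on_by_partition[OF B D conc_in_carrier[OF B xs] conc_in_carrier[OF B ys]])
  fix n
  have DB: "D \<inter> B n \<in> sets M" using D meas_partition_sets[OF B] by blast
  have "agree_on (D \<inter> B n) (conc E smul B xs) (xs n)"
    by (rule agree_on_subset[OF agree_on_conc[OF B xs] _ meas_partition_sets[OF B] DB
          conc_in_carrier[OF B xs] xs]) blast
  moreover have "agree_on (D \<inter> B n) (conc E smul B ys) (ys n)"
    by (rule agree_on_subset[OF agree_on_conc[OF B ys] _ meas_partition_sets[OF B] DB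
          conc_in_carrier[OF B ys] ys]) blast
  ultimately
  show "agree_on (D \<inter> B n) (conc E smul B xs) (conc E smul B ys)"
    using agree[of n] unfolding agree_on_def by simp
qed

lemma stable_set_conc_sets:
  assumes A: "meas_partition M A" and Y: "\<And>k. stable_set M E smul (Y k)"
  shows "stable_set M E smul (conc_sets E smul A Y)"
proof -
  have YE: "\<And>k. Y k \<subseteq> E" using Y stable_set_subset by blast
  note mem = mem_conc_sets[OF A YE]
  have "\<forall>k. \<exists>y. y \<in> Y k" using Y stable_set_nonempty by blast
  then obtain ys where "\<And>k. ys k \<in> Y k" by (metis choice)
  then have nonempty: "conc_sets E smul A Y \<noteq> {}" using conc_mem_conc_sets by blast
  have "conc E smul B xs \<in> conc_sets E smul A Y"
    if B: "meas_partition M B" and xs: "\<And>n. xs n \<in> conc_sets E smul A Y" for B xs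
  proof -
    have xsE: "\<And>n. xs n \<in> E" using xs by (simp add: mem)
    have "\<exists>y\<in>Y k. agree_on (A k) (conc E smul B xs) y" for k
    proof -
      have "\<forall>n. \<exists>y. y \<in> Y k \<and> agree_on (A k) (xs n) y" using xs by (simp add: mem) blast
      then obtain ys where ys: "\<And>n. ys n \<in> Y k" "\<And>n. agree_on (A k) (xs n) (ys n)"
        by (metis choice)
      have ysE: "\<And>n. ys n \<in> E" using ys(1) YE by blast
      have "agree_on (A k) (conc E smul B xs) (conc E smul B ys)"
      proof (rule agree_on_conc_conc[OF B meas_partition_sets[OF A] xsE ysE])
        fix n show "agree_on (A k \<inter> B n) (xs n) (ys n)"
          by (rule agree_on_subset[OF ys(2) _ meas_partition_sets[OF A] _ xsE ysE])
            (use meas_partition_sets[OF A] meas_partition_sets[OF B] in blast)+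
      qed
      moreover have "conc E smul B ys \<in> Y k" by (rule stable_set_conc[OF Y B]) (rule ys(1))
      ultimately show ?thesis by blast
    qed
    then show ?thesis using conc_in_carrier[OF B xsE] by (simp add: mem)
  qed
  moreover have "conc_sets E smul A Y \<subseteq> E" by (rule conc_sets_subset_carrier[OF A YE])
  ultimately show ?thesis
    unfolding stable_set_def using nonempty by blast
qed

text \<open>Piece n + 1 of the partition carries xs n; on the complement of all D n the truncated
  subtraction m - 1 = 0 fills in xs 0.\<close>

definition seq_glue :: "(nat \<Rightarrow> 'w set) \<Rightarrow> (nat \<Rightarrow> 'e) \<Rightarrow> 'e" where
  "seq_glue D xs = conc E smul (seq_partition D) (\<lambda>m. xs (m - 1))"

lemma seq_glue_mem:
  "stable_set M E smul V \<Longrightarrow> (\<And>n. D n \<in> sets M) \<Longrightarrow> (\<And>n. xs n \<in> V) \<Longrightarrow> seq_glue D xs \<in> V"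
  unfolding seq_glue_def by (rule stable_set_conc) (auto intro: meas_partition_seq_partition)

lemma seq_glue_mem_conc_sets:
  "(\<And>n. xs n \<in> Y n) \<Longrightarrow> seq_glue D xs \<in> conc_sets E smul (seq_partition D) (\<lambda>m. Y (m - 1))"
  unfolding seq_glue_def by (rule conc_mem_conc_sets)

lemma seq_glue_const: "(\<And>n. D n \<in> sets M) \<Longrightarrow> x \<in> E \<Longrightarrow> seq_glue D (\<lambda>_. x) = x"
  unfolding seq_glue_def by (rule conc_const[OF meas_partition_seq_partition])

lemma agree_on_Union_seq_glue:
  assumes D: "\<And>n. D n \<in> sets M" and xs: "\<And>n. xs n \<in> E" and ys: "\<And>n. ys n \<in> E"
    and agree: "\<And>n. agree_on (D n) (xs n) (ys n)"
  shows "agree_on (\<Union>n. D n) (seq_glue D xs) (seq_glue D ys)"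
proof -
  have P: "meas_partition M (seq_partition D)" by (rule meas_partition_seq_partition[OF D])
  show ?thesis
    unfolding seq_glue_def
  proof (rule agree_on_conc_conc[OF P])
    fix m
    show "agree_on ((\<Union>n. D n) \<inter> seq_partition D m) (xs (m - 1)) (ys (m - 1))"
    proof (cases m)
      case 0
      then show ?thesis using agree_on_empty xs ys by simp
    next
      case (Suc n)
      have "(\<Union>n. D n) \<inter> seq_partition D m \<subseteq> D n"
        using disjointed_subset[of D n] Suc by auto
      moreover have "(\<Union>n. D n) \<inter> seq_partition D m \<in> sets M"
        using D meas_partition_sets[OF P] by blast
      ultimately show ?thesis using agree_on_subset[OF agree] D xs ys Suc by simp
    qed
  qed (use D xs ys in auto)
qed

lemma agree_on_Union_seq_glue_const:
  assumes D: "\<And>n. D n \<in> sets M" and x: "x \<in> E" and ys: "\<And>n. ys n \<in> E"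
    and agree: "\<And>n. agree_on (D n) x (ys n)"
  shows "agree_on (\<Union>n. D n) x (seq_glue D ys)"
  using agree_on_Union_seq_glue[of D "\<lambda>_. x" ys] seq_glue_const[OF D x] assms by simp

lemma agree_on_seq_glue:
  assumes "\<And>n. D n \<in> sets M" "\<And>n. xs n \<in> E"
  shows "agree_on (disjointed D n) (seq_glue D xs) (xs n)"
  using agree_on_conc[of "seq_partition D" "\<lambda>m. xs (m - 1)" "Suc n"] assms
  unfolding seq_glue_def by (simp add: meas_partition_seq_partition)

definition paste :: "'w set \<Rightarrow> 'e \<Rightarrow> 'e \<Rightarrow> 'e" where
  "paste D x y = conc E smul (bipartition D) (\<lambda>n. if n = 0 then y else x)"

context
  fixes D :: "'w set" and x y :: 'e
  assumes D: "D \<in> sets M" and x: "x \<in> E" and y: "y \<in> E"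
begin

lemma paste_in_carrier: "paste D x y \<in> E"
  unfolding paste_def
  by (rule conc_in_carrier[OF meas_partition_bipartition[OF D]]) (simp add: x y)

lemma agree_on_paste_inside: "agree_on D (paste D x y) x"
proof -
  have "agree_on (bipartition D (Suc 0)) (paste D x y) ((\<lambda>n. if n = 0 then y else x) (Suc 0))"
    unfolding paste_def by (rule agree_on_conc[OF meas_partition_bipartition[OF D]]) (simp add: x y)
  then show ?thesis by simp
qed

lemma agree_on_paste_outside: "agree_on (space M - D) (paste D x y) y"
proof -
  have "agree_on (bipartition D 0) (paste D x y) ((\<lambda>n. if n = 0 then y else x) 0)"
    unfolding paste_def
    using agree_on_conc[OF meas_partition_bipartition[OF D], of "\<lambda>n. if n = 0 then y else x" 0]
    by (simp add: x y)
  then show ?thesis by simp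
qed

lemma paste_mem:
  assumes V: "stable_set M E smul V"
    and inside: "\<exists>v\<in>V. agree_on D x v" and outside: "\<exists>v\<in>V. agree_on (space M - D) y v"
  shows "paste D x y \<in> V"
proof (rule mem_stable_set_if_local[OF V meas_partition_bipartition[OF D] paste_in_carrier])
  fix n
  show "\<exists>v\<in>V. agree_on (bipartition D n) (paste D x y) v"
  proof (cases n)
    case 0
    then show ?thesis using outside agree_on_paste_outside agree_on_trans by (metis bipartition_0)
  next
    case (Suc m)
    show ?thesis
    proof (cases m)
      case 0
      then show ?thesis using Suc inside agree_on_paste_inside agree_on_trans by (metis bipartition_1)
    next
      case (Suc m')
      obtain v where "v \<in> V" using stable_set_nonempty[OF V] by blast
      then show ?thesis
        using Suc \<open>n = Suc m\<close> agree_on_empty[OF paste_in_carrier] stable_set_subset[OF V] by auto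
    qed
  qed
qed

end

lemma stable_set_singleton:
  assumes x: "x \<in> E"
  shows "stable_set M E smul {x}"
proof -
  have "conc E smul A xs \<in> {x}" if "meas_partition M A" "\<And>k. xs k \<in> {x}" for A xs
  proof -
    have "xs = (\<lambda>_. x)" using that(2) by auto
    then show ?thesis using conc_const[OF that(1) x] by simp
  qed
  then show ?thesis unfolding stable_set_def using x by blast
qed

lemma stable_coll_stable_set: "stable_coll M E smul \<W> \<Longrightarrow> W \<in> \<W> \<Longrightarrow> stable_set M E smul W"
  unfolding stable_coll_def by blast

lemma stable_coll_conc_sets:
  "stable_coll M E smul \<W> \<Longrightarrow> meas_partition M A \<Longrightarrow> (\<And>k. Y k \<in> \<W>) \<Longrightarrow> conc_sets E smul A Y \<in> \<W>"
  unfolding stable_coll_def by blast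

lemma stable_coll_nonempty: "stable_coll M E smul \<W> \<Longrightarrow> \<W> \<noteq> {}"
  unfolding stable_coll_def by blast

lemma stable_coll_singleton:
  assumes V: "stable_set M E smul V"
  shows "stable_coll M E smul {V}"
proof -
  have "conc_sets E smul A Y \<in> {V}" if "meas_partition M A" "\<And>k. Y k \<in> {V}" for A Y
  proof -
    have "Y = (\<lambda>_. V)" using that(2) by auto
    then show ?thesis using conc_sets_const[OF V that(1)] by simp
  qed
  then show ?thesis unfolding stable_coll_def using V by blast
qed

section \<open>Meeting and apartness on measurable sets\<close>

definition meets_on :: "'w set \<Rightarrow> 'e set \<Rightarrow> 'e set \<Rightarrow> bool" where
  "meets_on D U V \<longleftrightarrow> (\<exists>u\<in>U. \<exists>v\<in>V. agree_on D u v)"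

definition apart_on :: "'w set \<Rightarrow> 'e set \<Rightarrow> 'e set \<Rightarrow> bool" where
  "apart_on D U V \<longleftrightarrow>
     (\<forall>u\<in>U. \<forall>v\<in>V. \<forall>D'\<in>sets M. D' \<subseteq> D \<longrightarrow> agree_on D' u v \<longrightarrow> D' \<in> null_sets M)"

lemma meets_on_empty: "U \<noteq> {} \<Longrightarrow> V \<noteq> {} \<Longrightarrow> U \<subseteq> E \<Longrightarrow> V \<subseteq> E \<Longrightarrow> meets_on {} U V"
  unfolding meets_on_def using agree_on_empty by blast

lemma meets_on_ae_superset:
  "meets_on D U V \<Longrightarrow> D \<in> sets M \<Longrightarrow> D' \<in> sets M \<Longrightarrow> D' - D \<in> null_sets M \<Longrightarrow>
   U \<subseteq> E \<Longrightarrow> V \<subseteq> E \<Longrightarrow> meets_on D' U V"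
  unfolding meets_on_def by (meson agree_on_ae_superset subsetD)

lemma meets_on_Union:
  fixes D :: "nat \<Rightarrow> 'w set"
  assumes U: "stable_set M E smul U" and \<W>: "stable_coll M E smul \<W>" and D: "\<And>n. D n \<in> sets M"
    and meets: "\<And>n. \<exists>W\<in>\<W>. meets_on (D n) U W"
  shows "\<exists>W\<in>\<W>. meets_on (\<Union>n. D n) U W"
proof -
  have "\<forall>n. \<exists>W u w. W \<in> \<W> \<and> u \<in> U \<and> w \<in> W \<and> agree_on (D n) u w"
    using meets unfolding meets_on_def by blast
  then obtain Ws us ws where
    wit: "\<And>n. Ws n \<in> \<W>" "\<And>n. us n \<in> U" "\<And>n. ws n \<in> Ws n" "\<And>n. agree_on (D n) (us n) (ws n)"
    by metis
  have WsE: "\<And>n. ws n \<in> E" using wit(1,3) stable_coll_stable_set[OF \<W>] stable_set_subset by blast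
  have usE: "\<And>n. us n \<in> E" using wit(2) stable_set_subset[OF U] by blast
  let ?W = "conc_sets E smul (seq_partition D) (\<lambda>m. Ws (m - 1))"
  have "?W \<in> \<W>"
    by (rule stable_coll_conc_sets[OF \<W> meas_partition_seq_partition[OF D]]) (rule wit(1))
  moreover have "seq_glue D ws \<in> ?W" by (rule seq_glue_mem_conc_sets) (rule wit(3))
  moreover have "seq_glue D us \<in> U" by (rule seq_glue_mem[OF U D]) (rule wit(2))
  moreover have "agree_on (\<Union>n. D n) (seq_glue D us) (seq_glue D ws)"
    by (rule agree_on_Union_seq_glue[OF D usE WsE wit(4)])
  ultimately show ?thesis unfolding meets_on_def by blast
qed

lemma apart_on_empty: "apart_on {} U V"
  unfolding apart_on_def by auto

lemma apart_on_mono: "apart_on D U V \<Longrightarrow> D' \<subseteq> D \<Longrightarrow> U' \<subseteq> U \<Longrightarrow> V' \<subseteq> V \<Longrightarrow> apart_on D' U' V'"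
  unfolding apart_on_def by blast

lemma apart_onD:
  "apart_on D U V \<Longrightarrow> u \<in> U \<Longrightarrow> v \<in> V \<Longrightarrow> D' \<in> sets M \<Longrightarrow> D' \<subseteq> D \<Longrightarrow> agree_on D' u v
   \<Longrightarrow> D' \<in> null_sets M"
  unfolding apart_on_def by blast

lemma apart_on_ae_superset:
  assumes apart: "apart_on D U V" and D: "D \<in> sets M" and D': "D' \<in> sets M"
    and null: "D' - D \<in> null_sets M" and UV: "U \<subseteq> E" "V \<subseteq> E"
  shows "apart_on D' U V"
  unfolding apart_on_def
proof (intro ballI impI)
  fix u v D'' assume u: "u \<in> U" and v: "v \<in> V" and D'': "D'' \<in> sets M" "D'' \<subseteq> D'"
    and agree: "agree_on D'' u v"
  have "agree_on (D'' \<inter> D) u v"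
    by (rule agree_on_subset[OF agree]) (use u v UV D D'' in auto)
  then have "D'' \<inter> D \<in> null_sets M" by (intro apart_onD[OF apart u v]) (use D D'' in auto)
  moreover have "D'' - D \<in> null_sets M"
    by (rule null_sets_subset[OF null]) (use D D'' in auto)
  ultimately have "(D'' \<inter> D) \<union> (D'' - D) \<in> null_sets M" by blast
  moreover have "(D'' \<inter> D) \<union> (D'' - D) = D''" by blast
  ultimately show "D'' \<in> null_sets M" by simp
qed

lemma apart_on_conc_sets:
  assumes A: "meas_partition M A" and D: "D \<in> sets M"
    and XY: "\<And>k. X k \<subseteq> E" "\<And>k. Y k \<subseteq> E"
    and apart: "\<And>k. apart_on (D \<inter> A k) (X k) (Y k)"
  shows "apart_on D (conc_sets E smul A X) (conc_sets E smul A Y)"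
  unfolding apart_on_def
proof (intro ballI impI)
  fix u v D' assume u: "u \<in> conc_sets E smul A X" and v: "v \<in> conc_sets E smul A Y"
    and D': "D' \<in> sets M" "D' \<subseteq> D" and agree: "agree_on D' u v"
  note memX = mem_conc_sets[OF A XY(1)] and memY = mem_conc_sets[OF A XY(2)]
  have uv: "u \<in> E" "v \<in> E" using u v by (simp_all add: memX memY)
  have "D' \<inter> A k \<in> null_sets M" for k
  proof -
    obtain x y where xy: "x \<in> X k" "y \<in> Y k" "agree_on (A k) u x" "agree_on (A k) v y"
      using u v by (simp add: memX memY) blast
    have DA: "D' \<inter> A k \<in> sets M" using D' meas_partition_sets[OF A] by blast
    have xyE: "x \<in> E" "y \<in> E" using xy(1,2) XY by blast+
    have "agree_on (D' \<inter> A k) u x" "agree_on (D' \<inter> A k) v y" "agree_on (D' \<inter> A k) u v"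
      using agree_on_subset[OF xy(3) _ meas_partition_sets[OF A] DA uv(1) xyE(1)]
        agree_on_subset[OF xy(4) _ meas_partition_sets[OF A] DA uv(2) xyE(2)]
        agree_on_subset[OF agree _ D'(1) DA uv] by blast+
    then have "agree_on (D' \<inter> A k) x y" unfolding agree_on_def by simp
    moreover have "D' \<inter> A k \<subseteq> D \<inter> A k" using D'(2) by blast
    ultimately show ?thesis
      using apart[of k, unfolded apart_on_def, rule_format, OF xy(1,2) DA] by blast
  qed
  then show "D' \<in> null_sets M" by (rule null_sets_if_null_on_partition[OF A D'(1)])
qed

lemma apart_on_Union_seq:
  fixes D :: "nat \<Rightarrow> 'w set"
  assumes D: "\<And>n. D n \<in> sets M" and XY: "\<And>n. X n \<subseteq> E" "\<And>n. Y n \<subseteq> E"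
    and apart: "\<And>n. apart_on (D n) (X n) (Y n)"
  shows "apart_on (\<Union>n. D n) (conc_sets E smul (seq_partition D) (\<lambda>m. X (m - 1)))
                              (conc_sets E smul (seq_partition D) (\<lambda>m. Y (m - 1)))"
proof (rule apart_on_conc_sets[OF meas_partition_seq_partition[OF D]])
  fix m
  show "apart_on ((\<Union>n. D n) \<inter> seq_partition D m) (X (m - 1)) (Y (m - 1))"
  proof (cases m)
    case 0
    then show ?thesis using apart_on_empty by simp
  next
    case (Suc n)
    have "(\<Union>n. D n) \<inter> seq_partition D m \<subseteq> D n" using Suc disjointed_subset[of D n] by auto
    from apart_on_mono[OF apart[of n] this subset_refl subset_refl] show ?thesis using Suc by simp
  qed
qed (use D XY in auto)

lemma null_if_apart_on_self: "apart_on Q U V \<Longrightarrow> Q \<in> sets M \<Longrightarrow> y \<in> U \<Longrightarrow> y \<in> V \<Longrightarrow> Q \<in> null_sets M"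
  unfolding apart_on_def by force

lemma apart_on_transfer:
  assumes D: "D \<in> sets M" and E: "X \<subseteq> E" "V \<subseteq> E" "X' \<subseteq> E" "V' \<subseteq> E"
    and X: "\<forall>x\<in>X. \<exists>x'\<in>X'. agree_on D x x'" and V: "\<forall>v\<in>V. \<exists>v'\<in>V'. agree_on D v v'"
    and apart: "apart_on D X' V'"
  shows "apart_on D X V"
  unfolding apart_on_def
proof (intro ballI impI)
  fix x v D' assume x: "x \<in> X" and v: "v \<in> V" and D': "D' \<in> sets M" "D' \<subseteq> D"
    and xv: "agree_on D' x v"
  obtain x' v' where x': "x' \<in> X'" "agree_on D x x'" and v': "v' \<in> V'" "agree_on D v v'"
    using X V x v by blast
  have "agree_on D' x x'" "agree_on D' v v'"
    using agree_on_subset[OF x'(2) D'(2) D D'(1)] agree_on_subset[OF v'(2) D'(2) D D'(1)]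
      x v x'(1) v'(1) E by blast+
  then have "agree_on D' x' v'" using xv unfolding agree_on_def by simp
  then show "D' \<in> null_sets M" by (rule apart_onD[OF apart x'(1) v'(1) D'])
qed

lemma apart_on_Un:
  assumes "apart_on D1 X V" "apart_on D2 X V" "D1 \<in> sets M" "D2 \<in> sets M" "X \<subseteq> E" "V \<subseteq> E"
  shows "apart_on (D1 \<union> D2) X V"
  unfolding apart_on_def
proof (intro ballI impI)
  fix x v D' assume x: "x \<in> X" and v: "v \<in> V" and D': "D' \<in> sets M" "D' \<subseteq> D1 \<union> D2"
    and xv: "agree_on D' x v"
  have xvE: "x \<in> E" "v \<in> E" using x v assms(5,6) by blast+
  have s: "D' \<inter> D1 \<in> sets M" "D' \<inter> D2 \<in> sets M" using D'(1) assms(3,4) by blast+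
  have "agree_on (D' \<inter> D1) x v" by (rule agree_on_subset[OF xv _ D'(1) s(1) xvE]) blast
  then have n1: "D' \<inter> D1 \<in> null_sets M" by (intro apart_onD[OF assms(1) x v s(1)]) blast+
  have "agree_on (D' \<inter> D2) x v" by (rule agree_on_subset[OF xv _ D'(1) s(2) xvE]) blast
  then have n2: "D' \<inter> D2 \<in> null_sets M" by (intro apart_onD[OF assms(2) x v s(2)]) blast+
  from n1 n2 have "(D' \<inter> D1) \<union> (D' \<inter> D2) \<in> null_sets M" by blast
  moreover have "(D' \<inter> D1) \<union> (D' \<inter> D2) = D'" using D'(2) by blast
  ultimately show "D' \<in> null_sets M" by simp
qed

text \<open>On D the pasted point looks like z, which is apart from V' and hence, via the matching
  hypothesis, from V; off D it looks like p.\<close>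

lemma apart_on_paste:
  assumes Q: "Q \<in> sets M" and D: "D \<in> sets M" and E: "z \<in> E" "p \<in> E" "V \<subseteq> E" "V' \<subseteq> E"
    and lift: "\<forall>v\<in>V. \<exists>v'\<in>V'. agree_on D v v'"
    and z: "apart_on Q {z} V'" and p: "apart_on Q {p} V"
  shows "apart_on Q {paste D z p} V"
proof -
  let ?y = "paste D z p"
  have yE: "?y \<in> E" by (rule paste_in_carrier[OF D E(1,2)])
  have QD: "Q \<inter> D \<in> sets M" "Q - D \<in> sets M" using Q D by blast+
  have "apart_on (Q \<inter> D) {?y} V"
  proof (rule apart_on_transfer[OF QD(1) _ E(3) _ E(4)])
    show "\<forall>x\<in>{?y}. \<exists>x'\<in>{z}. agree_on (Q \<inter> D) x x'"
      using agree_on_subset[OF agree_on_paste_inside[OF D E(1,2)] _ D QD(1) yE E(1)] by blast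
    show "\<forall>v\<in>V. \<exists>v'\<in>V'. agree_on (Q \<inter> D) v v'"
      using lift agree_on_subset[OF _ _ D QD(1)] E(3,4) by blast
    show "apart_on (Q \<inter> D) {z} V'" by (rule apart_on_mono[OF z]) auto
  qed (use yE E in auto)
  moreover have "apart_on (Q - D) {?y} V"
  proof (rule apart_on_transfer[OF QD(2) _ E(3) _ E(3)])
    have "agree_on (Q - D) ?y p"
      by (rule agree_on_subset[OF agree_on_paste_outside[OF D E(1,2)]])
        (use Q QD D sets.sets_into_space yE E in auto)
    then show "\<forall>x\<in>{?y}. \<exists>x'\<in>{p}. agree_on (Q - D) x x'" by blast
    show "\<forall>v\<in>V. \<exists>v'\<in>V. agree_on (Q - D) v v'" using agree_on_refl by blast
    show "apart_on (Q - D) {p} V" by (rule apart_on_mono[OF p]) auto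
  qed (use yE E in auto)
  ultimately have "apart_on ((Q \<inter> D) \<union> (Q - D)) {?y} V"
    by (rule apart_on_Un[OF _ _ QD]) (use yE E in auto)
  moreover have "(Q \<inter> D) \<union> (Q - D) = Q" by blast
  ultimately show ?thesis by simp
qed

lemma meets_on_or_apart_on_piece:
  assumes U: "stable_set M E smul U" and \<W>: "stable_coll M E smul \<W>" and Z: "Z \<in> sets M"
  shows "(\<exists>W\<in>\<W>. meets_on Z U W) \<or> (\<exists>Z'\<in>sets M. Z' \<subseteq> Z \<and> Z' \<notin> null_sets M \<and> apart_on Z' U (\<Union>\<W>))"
proof -
  have UE: "U \<subseteq> E" by (rule stable_set_subset[OF U])
  have WE: "\<And>W. W \<in> \<W> \<Longrightarrow> W \<subseteq> E" using stable_coll_stable_set[OF \<W>] stable_set_subset by blast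
  let ?P = "\<lambda>D. \<exists>W\<in>\<W>. meets_on D U W"
  have "?P Z \<or> (\<exists>Z'\<in>sets M. Z' \<subseteq> Z \<and> Z' \<notin> null_sets M \<and>
                  (\<forall>D\<in>sets M. D \<subseteq> Z' \<longrightarrow> ?P D \<longrightarrow> D \<in> null_sets M))"
  proof (rule ess_local_dichotomy[OF _ _ _ Z])
    obtain W where W: "W \<in> \<W>" using stable_coll_nonempty[OF \<W>] by blast
    have "meets_on {} U W"
      by (rule meets_on_empty[OF stable_set_nonempty[OF U]
            stable_set_nonempty[OF stable_coll_stable_set[OF \<W> W]] UE WE[OF W]])
    then show "?P {}" using W by blast
    show "?P (\<Union>n. D n)" if "\<And>n. D n \<in> sets M" "\<And>n. ?P (D n)" for D :: "nat \<Rightarrow> 'w set"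
      by (rule meets_on_Union[OF U \<W> that])
    show "?P D'" if "D \<in> sets M" "D' \<in> sets M" "?P D" "D' - D \<in> null_sets M" for D D'
      using that meets_on_ae_superset[OF _ that(1,2,4) UE] WE by blast
  qed
  moreover have "apart_on Z' U (\<Union>\<W>)" if "\<forall>D\<in>sets M. D \<subseteq> Z' \<longrightarrow> ?P D \<longrightarrow> D \<in> null_sets M" for Z'
    using that unfolding apart_on_def meets_on_def by blast
  ultimately show ?thesis by blast
qed

lemma exists_conc_sets_agree:
  assumes B: "meas_partition M B" and \<W>: "\<And>m. stable_coll M E smul (\<W> m)"
    and W: "W \<in> \<W> n" and w: "w \<in> W"
  shows "\<exists>Wf. (\<forall>m. Wf m \<in> \<W> m) \<and> (\<exists>w'\<in>conc_sets E smul B Wf. agree_on (B n) w w')"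
proof -
  have "\<forall>m. \<exists>V v. V \<in> \<W> m \<and> v \<in> V"
    using \<W> stable_coll_nonempty stable_coll_stable_set stable_set_nonempty by blast
  then obtain V0 v0 where V0: "\<And>m. V0 m \<in> \<W> m" "\<And>m. v0 m \<in> V0 m" by metis
  define Wf where "Wf m = (if m = n then W else V0 m)" for m
  define wf where "wf m = (if m = n then w else v0 m)" for m
  have Wf: "\<And>m. Wf m \<in> \<W> m" and wf: "\<And>m. wf m \<in> Wf m"
    using W w V0 unfolding Wf_def wf_def by simp_all
  have wfE: "\<And>m. wf m \<in> E" using wf Wf \<W> stable_coll_stable_set stable_set_subset by blast
  have "agree_on (B n) (conc E smul B wf) w"
    using agree_on_conc[of B wf n, OF B wfE] unfolding wf_def by simp
  then show ?thesis using Wf conc_mem_conc_sets[of wf Wf] wf agree_on_commute by blast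
qed

section \<open>Stable hulls and stable finite subcollections\<close>

definition refine_partition :: "(nat \<Rightarrow> 'w set) \<Rightarrow> (nat \<Rightarrow> nat \<Rightarrow> 'w set) \<Rightarrow> nat \<Rightarrow> 'w set" where
  "refine_partition A B n = A (fst (prod_decode n)) \<inter> B (fst (prod_decode n)) (snd (prod_decode n))"

lemma meas_partition_refine_partition:
  assumes A: "meas_partition M A" and B: "\<And>k. meas_partition M (B k)"
  shows "meas_partition M (refine_partition A B)"
proof -
  have sets: "\<And>n. refine_partition A B n \<in> sets M"
    unfolding refine_partition_def using meas_partition_sets[OF A] meas_partition_sets[OF B] by blast
  have "disjoint_family (refine_partition A B)"
    unfolding disjoint_family_on_def
  proof (intro ballI impI)
    fix m n :: nat assume mn: "m \<noteq> n"
    obtain a b c d where ab: "prod_decode m = (a, b)" and cd: "prod_decode n = (c, d)" by fastforce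
    have "(a, b) \<noteq> (c, d)" using mn ab cd by (metis prod_decode_inverse)
    then consider "a \<noteq> c" | "a = c" "b \<noteq> d" by blast
    then show "refine_partition A B m \<inter> refine_partition A B n = {}"
    proof cases
      case 1
      then show ?thesis
        using A ab cd unfolding refine_partition_def meas_partition_def disjoint_family_on_def by auto
    next
      case 2
      then show ?thesis
        using B[of a] ab cd unfolding refine_partition_def meas_partition_def disjoint_family_on_def by auto
    qed
  qed
  moreover have "space M \<subseteq> (\<Union>n. refine_partition A B n)"
  proof
    fix w assume w: "w \<in> space M"
    obtain k where k: "w \<in> A k" using A w unfolding meas_partition_def by blast
    obtain j where j: "w \<in> B k j" using B[of k] w unfolding meas_partition_def by blast
    have "w \<in> refine_partition A B (prod_encode (k, j))"
      using k j unfolding refine_partition_def by simp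
    then show "w \<in> (\<Union>n. refine_partition A B n)" by blast
  qed
  ultimately show ?thesis
    using sets sets.sets_into_space unfolding meas_partition_def by blast
qed

lemma agree_on_mem_conc_sets_iff:
  assumes A: "A \<in> sets M" and B: "meas_partition M B" and Y: "\<And>j. Y j \<subseteq> E" and x: "x \<in> E"
  shows "(\<exists>w\<in>conc_sets E smul B Y. agree_on A x w) \<longleftrightarrow> (\<forall>j. \<exists>y\<in>Y j. agree_on (A \<inter> B j) x y)"
proof
  have Bj: "\<And>j. B j \<in> sets M" by (rule meas_partition_sets[OF B])
  assume "\<exists>w\<in>conc_sets E smul B Y. agree_on A x w"
  then obtain w where w: "w \<in> conc_sets E smul B Y" and xw: "agree_on A x w" by blast
  have wE: "w \<in> E" and wY: "\<forall>j. \<exists>y\<in>Y j. agree_on (B j) w y"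
    using w by (simp_all add: mem_conc_sets[OF B Y])
  show "\<forall>j. \<exists>y\<in>Y j. agree_on (A \<inter> B j) x y"
  proof
    fix j
    obtain y where y: "y \<in> Y j" "agree_on (B j) w y" using wY by blast
    have yE: "y \<in> E" using y(1) Y by blast
    have "agree_on (A \<inter> B j) x w" by (rule agree_on_subset[OF xw _ A _ x wE]) (use A Bj in blast)+
    moreover have "agree_on (A \<inter> B j) w y" by (rule agree_on_subset[OF y(2) _ Bj _ wE yE]) (use A Bj in blast)+
    ultimately show "\<exists>y\<in>Y j. agree_on (A \<inter> B j) x y" using y(1) agree_on_trans by blast
  qed
next
  have Bj: "\<And>j. B j \<in> sets M" by (rule meas_partition_sets[OF B])
  assume "\<forall>j. \<exists>y\<in>Y j. agree_on (A \<inter> B j) x y"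
  then have "\<forall>j. \<exists>y. y \<in> Y j \<and> agree_on (A \<inter> B j) x y" by blast
  then obtain ys where ys: "\<And>j. ys j \<in> Y j" "\<And>j. agree_on (A \<inter> B j) x (ys j)"
    by (metis choice)
  have ysE: "\<And>j. ys j \<in> E" using ys(1) Y by blast
  let ?w = "conc E smul B ys"
  have wE: "?w \<in> E" by (rule conc_in_carrier[OF B ysE])
  have "agree_on A x ?w"
  proof (rule agree_on_by_partition[OF B A x wE])
    fix j
    have "agree_on (A \<inter> B j) ?w (ys j)"
      by (rule agree_on_subset[OF agree_on_conc[OF B ysE] _ Bj _ wE ysE]) (use A Bj in blast)+
    then show "agree_on (A \<inter> B j) x ?w" using ys(2)[of j] unfolding agree_on_def by simp
  qed
  moreover have "?w \<in> conc_sets E smul B Y" by (rule conc_mem_conc_sets) (rule ys(1))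
  ultimately show "\<exists>w\<in>conc_sets E smul B Y. agree_on A x w" by blast
qed

lemma mem_conc_sets_nested:
  assumes A: "meas_partition M A" and B: "\<And>k. meas_partition M (B k)" and Y: "\<And>k j. Y k j \<subseteq> E"
  shows "x \<in> conc_sets E smul A (\<lambda>k. conc_sets E smul (B k) (Y k)) \<longleftrightarrow>
         x \<in> E \<and> (\<forall>k j. \<exists>y\<in>Y k j. agree_on (A k \<inter> B k j) x y)"
proof -
  have BE: "\<And>k. conc_sets E smul (B k) (Y k) \<subseteq> E" by (rule conc_sets_subset_carrier[OF B Y])
  have piece: "(\<exists>w\<in>conc_sets E smul (B k) (Y k). agree_on (A k) x w) \<longleftrightarrow>
      (\<forall>j. \<exists>y\<in>Y k j. agree_on (A k \<inter> B k j) x y)" if "x \<in> E" for k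
    by (rule agree_on_mem_conc_sets_iff[where B="B k" and Y="Y k", OF meas_partition_sets[OF A] B Y that])
  show ?thesis
    unfolding mem_conc_sets[OF A BE]
  proof (intro iffI conjI allI)
    assume h: "x \<in> E \<and> (\<forall>k. \<exists>y\<in>conc_sets E smul (B k) (Y k). agree_on (A k) x y)"
    then show "x \<in> E" by blast
    fix k j from h piece show "\<exists>y\<in>Y k j. agree_on (A k \<inter> B k j) x y" by blast
  next
    assume h: "x \<in> E \<and> (\<forall>k j. \<exists>y\<in>Y k j. agree_on (A k \<inter> B k j) x y)"
    then show "x \<in> E" by blast
    fix k from h piece show "\<exists>y\<in>conc_sets E smul (B k) (Y k). agree_on (A k) x y" by blast
  qed
qed

lemma conc_sets_nested:
  assumes A: "meas_partition M A" and B: "\<And>k. meas_partition M (B k)" and Y: "\<And>k j. Y k j \<subseteq> E"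
  shows "conc_sets E smul A (\<lambda>k. conc_sets E smul (B k) (Y k)) =
         conc_sets E smul (refine_partition A B) (\<lambda>n. Y (fst (prod_decode n)) (snd (prod_decode n)))"
proof -
  have P: "meas_partition M (refine_partition A B)" by (rule meas_partition_refine_partition[OF A B])
  have reindex: "(\<forall>n. \<exists>y\<in>Y (fst (prod_decode n)) (snd (prod_decode n)). agree_on (refine_partition A B n) x y)
        \<longleftrightarrow> (\<forall>k j. \<exists>y\<in>Y k j. agree_on (A k \<inter> B k j) x y)" for x
    unfolding refine_partition_def by (metis fst_conv snd_conv prod_encode_inverse)
  show ?thesis
  proof (rule set_eqI)
    fix x show "x \<in> conc_sets E smul A (\<lambda>k. conc_sets E smul (B k) (Y k)) \<longleftrightarrow>
      x \<in> conc_sets E smul (refine_partition A B) (\<lambda>n. Y (fst (prod_decode n)) (snd (prod_decode n)))"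
      unfolding mem_conc_sets_nested[OF A B Y] mem_conc_sets[OF P Y] reindex ..
  qed
qed

lemma conc_sets_swap:
  assumes A: "meas_partition M A" and B: "meas_partition M B" and V: "\<And>n k. V n k \<subseteq> E"
  shows "conc_sets E smul B (\<lambda>n. conc_sets E smul A (V n)) =
         conc_sets E smul A (\<lambda>k. conc_sets E smul B (\<lambda>n. V n k))"
proof (rule set_eqI)
  fix x
  have "(\<forall>n k. \<exists>y\<in>V n k. agree_on (B n \<inter> A k) x y) \<longleftrightarrow> (\<forall>k n. \<exists>y\<in>V n k. agree_on (A k \<inter> B n) x y)"
    by (auto simp: Int_commute)
  then show "x \<in> conc_sets E smul B (\<lambda>n. conc_sets E smul A (V n)) \<longleftrightarrow>
             x \<in> conc_sets E smul A (\<lambda>k. conc_sets E smul B (\<lambda>n. V n k))"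
    unfolding mem_conc_sets_nested[OF B A V] mem_conc_sets_nested[OF A B V] by simp
qed

lemma st_mono: "\<O> \<subseteq> \<O>' \<Longrightarrow> st M E smul \<O> \<subseteq> st M E smul \<O>'"
  unfolding st_def by blast

lemma st_subset:
  assumes \<X>: "stable_coll M E smul \<X>" and sub: "\<O> \<subseteq> \<X>"
  shows "st M E smul \<O> \<subseteq> \<X>"
proof
  fix W assume "W \<in> st M E smul \<O>"
  then obtain B U where "W = conc_sets E smul B U" "meas_partition M B" "\<And>j. U j \<in> \<O>"
    unfolding st_def by blast
  then show "W \<in> \<X>" using stable_coll_conc_sets[OF \<X>] sub by blast
qed

lemma mem_st: assumes V: "stable_set M E smul V" and "V \<in> \<O>" shows "V \<in> st M E smul \<O>"
proof -
  have P: "meas_partition M (bipartition {})" by (rule meas_partition_bipartition) simp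
  have "V = conc_sets E smul (bipartition {}) (\<lambda>_. V)" using conc_sets_const[OF V P] by simp
  then show ?thesis unfolding st_def using P assms(2) by blast
qed

lemma stable_set_st:
  assumes \<O>: "\<And>U. U \<in> \<O> \<Longrightarrow> stable_set M E smul U" and W: "W \<in> st M E smul \<O>"
  shows "stable_set M E smul W"
proof -
  obtain B U where W': "W = conc_sets E smul B U" and B: "meas_partition M B" and U: "\<And>j. U j \<in> \<O>"
    using W unfolding st_def by blast
  have "stable_set M E smul (conc_sets E smul B U)" by (rule stable_set_conc_sets[OF B \<O>[OF U]])
  then show ?thesis using W' by simp
qed

lemma conc_sets_st:
  assumes \<O>: "\<And>U. U \<in> \<O> \<Longrightarrow> stable_set M E smul U" and A: "meas_partition M A"
    and V: "\<And>k. V k \<in> st M E smul \<O>"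
  shows "conc_sets E smul A V \<in> st M E smul \<O>"
proof -
  have "\<forall>k. \<exists>p. V k = conc_sets E smul (fst p) (snd p) \<and> meas_partition M (fst p) \<and> (\<forall>j. snd p j \<in> \<O>)"
  proof
    fix k
    obtain B U where "V k = conc_sets E smul B U" "meas_partition M B" "\<forall>j. U j \<in> \<O>"
      using V[of k] unfolding st_def by blast
    then show "\<exists>p. V k = conc_sets E smul (fst p) (snd p) \<and> meas_partition M (fst p) \<and> (\<forall>j. snd p j \<in> \<O>)"
      by (intro exI[of _ "(B, U)"]) simp
  qed
  then obtain p where "\<forall>k. V k = conc_sets E smul (fst (p k)) (snd (p k)) \<and>
    meas_partition M (fst (p k)) \<and> (\<forall>j. snd (p k) j \<in> \<O>)"
    by (rule choice[THEN exE])
  then have p: "\<And>k. V k = conc_sets E smul (fst (p k)) (snd (p k))"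
    "\<And>k. meas_partition M (fst (p k))" "\<And>k j. snd (p k) j \<in> \<O>"
    by blast+
  define B where "B k = fst (p k)" for k
  define U where "U k = snd (p k)" for k
  have B: "\<And>k. meas_partition M (B k)" and U: "\<And>k j. U k j \<in> \<O>"
    using p(2,3) unfolding B_def U_def by blast+
  have UE: "\<And>k j. U k j \<subseteq> E" using U \<O> stable_set_subset by blast
  have "V = (\<lambda>k. conc_sets E smul (B k) (U k))" using p(1) unfolding B_def U_def by (intro ext) simp
  then have "conc_sets E smul A V = conc_sets E smul (refine_partition A B)
                    (\<lambda>n. U (fst (prod_decode n)) (snd (prod_decode n)))"
    using conc_sets_nested[OF A B UE] by simp
  then show ?thesis
    unfolding st_def
    by (intro CollectI exI[of _ "refine_partition A B"]
        exI[of _ "\<lambda>n. U (fst (prod_decode n)) (snd (prod_decode n))"] conjI allI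
        meas_partition_refine_partition[OF A B] U)
qed

lemma st_singleton: assumes V: "stable_set M E smul V" shows "st M E smul {V} = {V}"
proof
  show "{V} \<subseteq> st M E smul {V}" using mem_st[OF V] by blast
  show "st M E smul {V} \<subseteq> {V}"
  proof
    fix W assume "W \<in> st M E smul {V}"
    then obtain B U where "W = conc_sets E smul B U" "meas_partition M B" "\<And>j. U j \<in> {V}"
      unfolding st_def by blast
    moreover then have "U = (\<lambda>_. V)" by auto
    ultimately show "W \<in> {V}" using conc_sets_const[OF V] by simp
  qed
qed

lemma st_member_subset:
  assumes V: "stable_set M E smul V" and \<O>: "\<And>U. U \<in> \<O> \<Longrightarrow> U \<subseteq> V" and W: "W \<in> st M E smul \<O>"
  shows "W \<subseteq> V"
proof -
  obtain B U where "W = conc_sets E smul B U" "meas_partition M B" "\<And>j. U j \<in> \<O>"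
    using W unfolding st_def by blast
  then show ?thesis using conc_sets_mono[of U "\<lambda>_. V" B] \<O> conc_sets_const[OF V] by blast
qed

lemma st_directed:
  assumes \<Y>: "\<And>Y. Y \<in> \<Y> \<Longrightarrow> stable_set M E smul Y"
    and directed: "\<And>Y1 Y2. Y1 \<in> \<Y> \<Longrightarrow> Y2 \<in> \<Y> \<Longrightarrow> \<exists>Y3\<in>\<Y>. Y3 \<subseteq> Y1 \<inter> Y2"
    and G: "G1 \<in> st M E smul \<Y>" "G2 \<in> st M E smul \<Y>"
  shows "\<exists>G3\<in>st M E smul \<Y>. G3 \<subseteq> G1 \<inter> G2"
proof -
  obtain A1 Y1 A2 Y2 where
    G1: "G1 = conc_sets E smul A1 Y1" "meas_partition M A1" "\<And>k. Y1 k \<in> \<Y>" and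
    G2: "G2 = conc_sets E smul A2 Y2" "meas_partition M A2" "\<And>k. Y2 k \<in> \<Y>"
    using G unfolding st_def by blast
  obtain c where c: "\<And>k j. c k j \<in> \<Y>" "\<And>k j. c k j \<subseteq> Y1 k \<inter> Y2 j"
    using directed[OF G1(3) G2(3)] by metis
  have cE: "\<And>k j. c k j \<subseteq> E" using c(1) \<Y> stable_set_subset by blast
  have Y1s: "\<And>k. stable_set M E smul (Y1 k)" and Y2s: "\<And>k. stable_set M E smul (Y2 k)"
    using G1(3) G2(3) \<Y> by blast+
  let ?G3 = "conc_sets E smul A1 (\<lambda>k. conc_sets E smul A2 (c k))"
  have "?G3 \<in> st M E smul \<Y>"
    unfolding conc_sets_nested[OF G1(2) G2(2) cE] st_def
    using meas_partition_refine_partition[OF G1(2) G2(2)] c(1) by blast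
  moreover have "?G3 \<subseteq> conc_sets E smul A1 (\<lambda>k. conc_sets E smul A2 (\<lambda>_. Y1 k))"
    using c(2) by (intro conc_sets_mono) blast
  then have "?G3 \<subseteq> G1" using conc_sets_const[OF Y1s G2(2)] G1(1) by simp
  moreover have "?G3 \<subseteq> conc_sets E smul A1 (\<lambda>k. conc_sets E smul A2 Y2)"
    using c(2) by (intro conc_sets_mono) blast
  then have "?G3 \<subseteq> G2" using conc_sets_const[OF stable_set_conc_sets[OF G2(2) Y2s] G1(2)] G2(1) by simp
  ultimately show ?thesis by blast
qed

lemma apart_on_st:
  assumes Q: "Q \<in> sets M" and b: "b \<subseteq> E"
    and \<O>: "\<And>U. U \<in> \<O> \<Longrightarrow> U \<subseteq> E \<and> apart_on Q U b" and V: "V \<in> st M E smul \<O>"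
  shows "apart_on Q V b"
proof -
  obtain B U where V: "V = conc_sets E smul B U" and B: "meas_partition M B" and U: "\<And>j. U j \<in> \<O>"
    using V unfolding st_def by blast
  have "apart_on Q (conc_sets E smul B U) (conc_sets E smul B (\<lambda>_. b))"
  proof (rule apart_on_conc_sets[OF B Q])
    fix j
    show "U j \<subseteq> E" using \<O>[OF U[of j]] by blast
    show "b \<subseteq> E" by (rule b)
    show "apart_on (Q \<inter> B j) (U j) b" using \<O>[OF U[of j]] apart_on_mono[of Q "U j" b "Q \<inter> B j"] by blast
  qed
  then show ?thesis unfolding V using apart_on_mono subset_conc_sets_const[OF b B] by blast
qed

text \<open>The stable finite subcollections of \<O> are exactly the collections fin_sub A Os with
  fin_sub_index \<O> A Os; the arguments below work with the parameters A and Os directly.\<close>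

definition fin_sub_index :: "'e set set \<Rightarrow> (nat \<Rightarrow> 'w set) \<Rightarrow> (nat \<Rightarrow> 'e set set) \<Rightarrow> bool" where
  "fin_sub_index \<O> A Os \<longleftrightarrow> meas_partition M A \<and> (\<forall>k. finite (Os k) \<and> Os k \<noteq> {} \<and> Os k \<subseteq> \<O>)"

definition fin_sub :: "(nat \<Rightarrow> 'w set) \<Rightarrow> (nat \<Rightarrow> 'e set set) \<Rightarrow> 'e set set" where
  "fin_sub A Os = {conc_sets E smul A V | V. \<forall>k. V k \<in> st M E smul (Os k)}"

lemma fin_sub_index_partition: "fin_sub_index \<O> A Os \<Longrightarrow> meas_partition M A"
  unfolding fin_sub_index_def by blast

lemma stable_finite_sub_obtain:
  assumes "stable_finite_sub M E smul \<O> \<O>'"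
  obtains A Os where "fin_sub_index \<O> A Os" and "\<O>' = fin_sub A Os"
  using assms unfolding stable_finite_sub_def fin_sub_index_def fin_sub_def by blast

context
  fixes \<O> :: "'e set set"
  assumes \<O>: "stable_coll M E smul \<O>"
begin

lemma stable_set_st_fin_sub_index:
  assumes d: "fin_sub_index \<O> A Os" and V: "V \<in> st M E smul (Os k)"
  shows "stable_set M E smul V"
proof (rule stable_set_st[OF _ V])
  fix U assume "U \<in> Os k"
  then show "stable_set M E smul U"
    using d stable_coll_stable_set[OF \<O>] unfolding fin_sub_index_def by blast
qed

lemma fin_sub_subset:
  assumes d: "fin_sub_index \<O> A Os"
  shows "fin_sub A Os \<subseteq> \<O>"
proof
  fix W assume "W \<in> fin_sub A Os"
  then obtain V where W: "W = conc_sets E smul A V" and V: "\<And>k. V k \<in> st M E smul (Os k)"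
    unfolding fin_sub_def by blast
  have "V k \<in> \<O>" for k
    using st_subset[OF \<O>, of "Os k"] V[of k] d unfolding fin_sub_index_def by blast
  then show "W \<in> \<O>"
    unfolding W by (rule stable_coll_conc_sets[OF \<O> fin_sub_index_partition[OF d]])
qed

lemma stable_finite_sub_fin_sub:
  assumes d: "fin_sub_index \<O> A Os"
  shows "stable_finite_sub M E smul \<O> (fin_sub A Os)"
  unfolding stable_finite_sub_def
proof (intro conjI exI)
  show "fin_sub A Os \<subseteq> \<O>" by (rule fin_sub_subset[OF d])
  show "meas_partition M A" by (rule fin_sub_index_partition[OF d])
  show "\<forall>k. finite (Os k) \<and> Os k \<noteq> {} \<and> Os k \<subseteq> \<O>" using d unfolding fin_sub_index_def by blast
  show "fin_sub A Os = {conc_sets E smul A V |V. \<forall>k. V k \<in> st M E smul (Os k)}"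
    unfolding fin_sub_def ..
qed

lemma stable_coll_fin_sub:
  assumes d: "fin_sub_index \<O> A Os"
  shows "stable_coll M E smul (fin_sub A Os)"
proof -
  have A: "meas_partition M A" by (rule fin_sub_index_partition[OF d])
  have "\<forall>k. \<exists>U. U \<in> Os k" using d unfolding fin_sub_index_def by blast
  then obtain U where U: "\<And>k. U k \<in> Os k" by metis
  have "\<And>k. U k \<in> st M E smul (Os k)"
    using U mem_st stable_coll_stable_set[OF \<O>] d unfolding fin_sub_index_def by blast
  then have nonempty: "fin_sub A Os \<noteq> {}" unfolding fin_sub_def by blast
  have "conc_sets E smul B W \<in> fin_sub A Os"
    if B: "meas_partition M B" and W: "\<And>n. W n \<in> fin_sub A Os" for B W
  proof -
    have "\<forall>n. \<exists>V. W n = conc_sets E smul A V \<and> (\<forall>k. V k \<in> st M E smul (Os k))"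
      using W unfolding fin_sub_def by blast
    then obtain V where V: "\<And>n. W n = conc_sets E smul A (V n)" "\<And>n k. V n k \<in> st M E smul (Os k)"
      by metis
    have VE: "\<And>n k. V n k \<subseteq> E"
      using stable_set_st_fin_sub_index[OF d V(2)] stable_set_subset by blast
    have "W = (\<lambda>n. conc_sets E smul A (V n))" using V(1) by (intro ext) simp
    then have "conc_sets E smul B W = conc_sets E smul A (\<lambda>k. conc_sets E smul B (\<lambda>n. V n k))"
      using conc_sets_swap[OF A B VE] by simp
    moreover have "conc_sets E smul B (\<lambda>n. V n k) \<in> st M E smul (Os k)" for k
    proof (rule conc_sets_st[OF _ B])
      fix U assume "U \<in> Os k"
      then show "stable_set M E smul U"
        using d stable_coll_stable_set[OF \<O>] unfolding fin_sub_index_def by blast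
    qed (rule V(2))
    ultimately show ?thesis unfolding fin_sub_def by blast
  qed
  then show ?thesis
    unfolding stable_coll_def using nonempty fin_sub_subset[OF d] stable_coll_stable_set[OF \<O>]
    by blast
qed

lemma fin_sub_index_const: "meas_partition M A \<Longrightarrow> V \<in> \<O> \<Longrightarrow> fin_sub_index \<O> A (\<lambda>_. {V})"
  unfolding fin_sub_index_def by simp

lemma fin_sub_const:
  assumes A: "meas_partition M A" and V: "V \<in> \<O>"
  shows "fin_sub A (\<lambda>_. {V}) = {V}"
proof -
  have Vs: "stable_set M E smul V" by (rule stable_coll_stable_set[OF \<O> V])
  have "fin_sub A (\<lambda>_. {V}) = {conc_sets E smul A V' | V'. \<forall>k. V' k \<in> {V}}"
    unfolding fin_sub_def st_singleton[OF Vs] ..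
  also have "\<dots> = {conc_sets E smul A (\<lambda>_. V)}"
    by (auto intro!: arg_cong[where f = "conc_sets E smul A"])
  also have "\<dots> = {V}" using conc_sets_const[OF Vs A] by simp
  finally show ?thesis .
qed

lemma fin_sub_common_refinement:
  assumes d1: "fin_sub_index \<O> A1 Os1" and d2: "fin_sub_index \<O> A2 Os2"
  obtains A3 Os3 where "fin_sub_index \<O> A3 Os3"
    and "fin_sub A1 Os1 \<subseteq> fin_sub A3 Os3" and "fin_sub A2 Os2 \<subseteq> fin_sub A3 Os3"
proof
  let ?A3 = "refine_partition A1 (\<lambda>_. A2)"
  let ?Os3 = "\<lambda>n. Os1 (fst (prod_decode n)) \<union> Os2 (snd (prod_decode n))"
  have A1: "meas_partition M A1" and A2: "meas_partition M A2"
    using d1 d2 by (simp_all add: fin_sub_index_partition)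
  show "fin_sub_index \<O> ?A3 ?Os3"
    using meas_partition_refine_partition[OF A1 A2] d1 d2 unfolding fin_sub_index_def by auto
  show "fin_sub A1 Os1 \<subseteq> fin_sub ?A3 ?Os3"
  proof
    fix W assume "W \<in> fin_sub A1 Os1"
    then obtain V where W: "W = conc_sets E smul A1 V" and V: "\<And>k. V k \<in> st M E smul (Os1 k)"
      unfolding fin_sub_def by blast
    have Vs: "\<And>k. stable_set M E smul (V k)" by (rule stable_set_st_fin_sub_index[OF d1 V])
    have VE: "\<And>k j. V k \<subseteq> E" using Vs stable_set_subset by blast
    have "W = conc_sets E smul A1 (\<lambda>k. conc_sets E smul A2 (\<lambda>_. V k))"
      unfolding W using conc_sets_const[OF Vs A2] by simp
    also have "\<dots> = conc_sets E smul ?A3 (\<lambda>n. V (fst (prod_decode n)))"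
      by (rule conc_sets_nested[OF A1 A2 VE])
    finally show "W \<in> fin_sub ?A3 ?Os3"
      unfolding fin_sub_def using V st_mono[OF Un_upper1] by blast
  qed
  show "fin_sub A2 Os2 \<subseteq> fin_sub ?A3 ?Os3"
  proof
    fix W assume "W \<in> fin_sub A2 Os2"
    then obtain V where W: "W = conc_sets E smul A2 V" and V: "\<And>k. V k \<in> st M E smul (Os2 k)"
      unfolding fin_sub_def by blast
    have Vs: "\<And>k. stable_set M E smul (V k)" by (rule stable_set_st_fin_sub_index[OF d2 V])
    have VE: "\<And>k j. V j \<subseteq> E" using Vs stable_set_subset by blast
    have "W = conc_sets E smul A1 (\<lambda>_. conc_sets E smul A2 V)"
      unfolding W using conc_sets_const[OF stable_set_conc_sets[OF A2 Vs] A1] by simp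
    also have "\<dots> = conc_sets E smul ?A3 (\<lambda>n. V (snd (prod_decode n)))"
      by (rule conc_sets_nested[OF A1 A2 VE])
    finally show "W \<in> fin_sub ?A3 ?Os3"
      unfolding fin_sub_def using V st_mono[OF Un_upper2] by blast
  qed
qed

lemma fin_sub_combine:
  assumes Q: "meas_partition M Q" and d: "\<And>n. fin_sub_index \<O> (A n) (Os n)"
  obtains A' Os' where "fin_sub_index \<O> A' Os'"
    and "\<And>W. (\<And>n. W n \<in> fin_sub (A n) (Os n)) \<Longrightarrow> conc_sets E smul Q W \<in> fin_sub A' Os'"
proof
  let ?A' = "refine_partition Q A"
  let ?Os' = "\<lambda>m. Os (fst (prod_decode m)) (snd (prod_decode m))"
  have A: "\<And>n. meas_partition M (A n)" by (rule fin_sub_index_partition[OF d])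
  show "fin_sub_index \<O> ?A' ?Os'"
    using meas_partition_refine_partition[OF Q A] d unfolding fin_sub_index_def by auto
  fix W assume W: "\<And>n. W n \<in> fin_sub (A n) (Os n)"
  have "\<forall>n. \<exists>V. W n = conc_sets E smul (A n) V \<and> (\<forall>k. V k \<in> st M E smul (Os n k))"
    using W unfolding fin_sub_def by blast
  then obtain V where V: "\<And>n. W n = conc_sets E smul (A n) (V n)" "\<And>n k. V n k \<in> st M E smul (Os n k)"
    by metis
  have VE: "\<And>n k. V n k \<subseteq> E" using stable_set_st_fin_sub_index[OF d V(2)] stable_set_subset by blast
  have "W = (\<lambda>n. conc_sets E smul (A n) (V n))" using V(1) by (intro ext) simp
  then have "conc_sets E smul Q W = conc_sets E smul ?A' (\<lambda>m. V (fst (prod_decode m)) (snd (prod_decode m)))"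
    using conc_sets_nested[OF Q A VE] by simp
  then show "conc_sets E smul Q W \<in> fin_sub ?A' ?Os'"
    unfolding fin_sub_def using V(2) by blast
qed

end

lemma stable_set_Inter:
  assumes "\<X> \<noteq> {}" and "\<And>X. X \<in> \<X> \<Longrightarrow> stable_set M E smul X" and "\<Inter>\<X> \<noteq> {}"
  shows "stable_set M E smul (\<Inter>\<X>)"
proof -
  have "\<Inter>\<X> \<subseteq> E" using assms(1,2) stable_set_subset by blast
  moreover have "conc E smul A xs \<in> \<Inter>\<X>" if "meas_partition M A" "\<And>k. xs k \<in> \<Inter>\<X>" for A xs
    using stable_set_conc[OF assms(2) that(1)] that(2) by blast
  ultimately show ?thesis unfolding stable_set_def using assms(3) by blast
qed

lemma conc_mem_Inter_fin_sub:
  assumes A: "meas_partition M A" and ys: "\<And>k. ys k \<in> E"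
    and Os: "\<And>k U. U \<in> Os k \<Longrightarrow> ys k \<in> U \<and> U \<subseteq> E"
  shows "conc E smul A ys \<in> \<Inter>(fin_sub A Os)"
proof
  fix W assume "W \<in> fin_sub A Os"
  then obtain V where W: "W = conc_sets E smul A V" and V: "\<And>k. V k \<in> st M E smul (Os k)"
    unfolding fin_sub_def by blast
  have "ys k \<in> V k" for k
  proof -
    obtain B U where BU: "V k = conc_sets E smul B U" "meas_partition M B" "\<And>j. U j \<in> Os k"
      using V[of k] unfolding st_def by blast
    have UE: "\<And>j. U j \<subseteq> E" using BU(3) Os by blast
    show ?thesis
      unfolding BU(1) mem_conc_sets[of B U, OF BU(2) UE] using ys Os BU(3) agree_on_refl by blast
  qed
  then show "conc E smul A ys \<in> W" unfolding W by (rule conc_mem_conc_sets)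
qed

lemma Inter_fin_sub_conc:
  assumes \<O>: "stable_coll M E smul \<O>" and B: "meas_partition M B"
    and d: "\<And>n. fin_sub_index \<O> (A n) (Os n)" and ne: "\<And>n. \<Inter>(fin_sub (A n) (Os n)) \<noteq> {}"
  obtains A' Os' where "fin_sub_index \<O> A' Os'"
    and "\<Inter>(fin_sub A' Os') \<subseteq> conc_sets E smul B (\<lambda>n. \<Inter>(fin_sub (A n) (Os n)))"
proof -
  obtain A' Os' where d': "fin_sub_index \<O> A' Os'"
    and comb: "\<And>W. (\<And>n. W n \<in> fin_sub (A n) (Os n)) \<Longrightarrow> conc_sets E smul B W \<in> fin_sub A' Os'"
    using fin_sub_combine[where A=A and Os=Os, OF \<O> B d] by blast
  have sc: "\<And>n. stable_coll M E smul (fin_sub (A n) (Os n))" by (rule stable_coll_fin_sub[OF \<O> d])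
  have IE: "\<And>n. \<Inter>(fin_sub (A n) (Os n)) \<subseteq> E"
    using sc stable_coll_nonempty stable_coll_stable_set stable_set_subset by blast
  have "\<Inter>(fin_sub A' Os') \<subseteq> conc_sets E smul B (\<lambda>n. \<Inter>(fin_sub (A n) (Os n)))"
  proof
    fix z assume z: "z \<in> \<Inter>(fin_sub A' Os')"
    have zE: "z \<in> E"
      using z stable_coll_nonempty[OF stable_coll_fin_sub[OF \<O> d']]
        stable_coll_stable_set[OF stable_coll_fin_sub[OF \<O> d']] stable_set_subset by blast
    have "\<exists>y\<in>\<Inter>(fin_sub (A n) (Os n)). agree_on (B n) z y" for n
    proof -
      have Bn: "B n \<in> sets M" by (rule meas_partition_sets[OF B])
      obtain p where p: "p \<in> \<Inter>(fin_sub (A n) (Os n))" using ne by blast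
      have pE: "p \<in> E" using p IE by blast
      have "paste (B n) z p \<in> W" if W: "W \<in> fin_sub (A n) (Os n)" for W
      proof -
        have "\<forall>m. \<exists>V. V \<in> fin_sub (A m) (Os m)" using sc stable_coll_nonempty by blast
        then obtain V0 where V0: "\<And>m. V0 m \<in> fin_sub (A m) (Os m)" by metis
        define Wf where "Wf m = (if m = n then W else V0 m)" for m
        have Wf: "\<And>m. Wf m \<in> fin_sub (A m) (Os m)" using W V0 unfolding Wf_def by simp
        have WfE: "\<And>m. Wf m \<subseteq> E" using Wf sc stable_coll_stable_set stable_set_subset by blast
        have "z \<in> conc_sets E smul B Wf" using z comb[OF Wf] by blast
        then have "\<exists>w\<in>W. agree_on (B n) z w"
          unfolding mem_conc_sets[of B Wf, OF B WfE] Wf_def by (metis (full_types))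
        moreover have "\<exists>v\<in>W. agree_on (space M - B n) p v" using p W by (intro bexI[of _ p]) auto
        ultimately show ?thesis
          by (rule paste_mem[OF Bn zE pE stable_coll_stable_set[OF sc W]])
      qed
      then show ?thesis using agree_on_paste_inside[OF Bn zE pE] agree_on_commute by blast
    qed
    then show "z \<in> conc_sets E smul B (\<lambda>n. \<Inter>(fin_sub (A n) (Os n)))"
      unfolding mem_conc_sets[OF B IE] using zE by blast
  qed
  then show ?thesis using d' that by blast
qed

section \<open>Stable filters\<close>

lemma stable_filter_filter_on: "stable_filter M E smul S \<F> \<Longrightarrow> filter_on S \<F>"
  unfolding stable_filter_def by blast

lemma stable_filter_stable_subset:
  "stable_filter M E smul S \<F> \<Longrightarrow> X \<in> \<F> \<Longrightarrow> \<exists>B\<in>\<F>. stable_set M E smul B \<and> B \<subseteq> X"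
  unfolding stable_filter_def filter_base_def stable_coll_def by blast

definition filter_generated :: "'e set \<Rightarrow> 'e set set \<Rightarrow> 'e set set" where
  "filter_generated S \<G> = {X. X \<subseteq> S \<and> (\<exists>G\<in>\<G>. G \<subseteq> X)}"

lemma stable_filter_filter_generated:
  assumes S: "stable_set M E smul S" and ne: "\<G> \<noteq> {}"
    and G: "\<And>G. G \<in> \<G> \<Longrightarrow> stable_set M E smul G" "\<And>G. G \<in> \<G> \<Longrightarrow> G \<subseteq> S"
    and directed: "\<And>G1 G2. G1 \<in> \<G> \<Longrightarrow> G2 \<in> \<G> \<Longrightarrow> \<exists>G3\<in>\<G>. G3 \<subseteq> G1 \<inter> G2"
    and conc: "\<And>B Gs. meas_partition M B \<Longrightarrow> (\<And>n. Gs n \<in> \<G>) \<Longrightarrow> \<exists>G\<in>\<G>. G \<subseteq> conc_sets E smul B Gs"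
  shows "stable_filter M E smul S (filter_generated S \<G>)"
proof -
  let ?F = "filter_generated S \<G>"
  obtain G0 where G0: "G0 \<in> \<G>" using ne by blast
  have mem: "X \<in> ?F \<longleftrightarrow> X \<subseteq> S \<and> (\<exists>G\<in>\<G>. G \<subseteq> X)" for X
    unfolding filter_generated_def by blast
  have Int: "X \<inter> Y \<in> ?F" if XF: "X \<in> ?F" and YF: "Y \<in> ?F" for X Y
  proof -
    obtain G1 G2 where XY: "X \<subseteq> S" "G1 \<in> \<G>" "G1 \<subseteq> X" "G2 \<in> \<G>" "G2 \<subseteq> Y"
      using XF YF unfolding mem by blast
    obtain G3 where "G3 \<in> \<G>" "G3 \<subseteq> G1 \<inter> G2" using directed[OF XY(2,4)] by blast
    then show ?thesis unfolding mem using XY by blast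
  qed
  have "filter_on S ?F"
    unfolding filter_on_def
  proof (intro conjI ballI allI impI Int)
    show "S \<in> ?F" unfolding mem using G0 G(2) by blast
    show "{} \<notin> ?F" unfolding mem using G(1) stable_set_nonempty by blast
    fix X assume X: "X \<in> ?F"
    then show "X \<subseteq> S" unfolding mem by blast
    fix Y assume "X \<subseteq> Y \<and> Y \<subseteq> S"
    then show "Y \<in> ?F" using X unfolding mem by blast
  qed
  moreover
  define \<B> where "\<B> = {X \<in> ?F. stable_set M E smul X}"
  have "filter_base ?F \<B>"
    unfolding filter_base_def \<B>_def using G unfolding filter_generated_def by blast
  moreover have "stable_coll M E smul \<B>"
    unfolding stable_coll_def
  proof (intro conjI ballI allI impI)
    show "\<B> \<noteq> {}" using G0 G unfolding \<B>_def filter_generated_def by blast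
  next
    fix B :: "nat \<Rightarrow> 'w set" and X :: "nat \<Rightarrow> 'e set"
    assume "meas_partition M B \<and> (\<forall>k. X k \<in> \<B>)"
    then have B: "meas_partition M B" and X: "\<And>k. X k \<in> \<B>" by auto
    have "\<forall>n. \<exists>G\<in>\<G>. G \<subseteq> X n" using X unfolding \<B>_def filter_generated_def by blast
    then obtain Gs :: "nat \<Rightarrow> 'e set" where Gs: "\<And>n. Gs n \<in> \<G>" "\<And>n. Gs n \<subseteq> X n" by metis
    obtain G' where G': "G' \<in> \<G>" "G' \<subseteq> conc_sets E smul B Gs" using conc[of B Gs, OF B Gs(1)] by blast
    have XS: "\<And>n. X n \<subseteq> S" and Xs: "\<And>n. stable_set M E smul (X n)"
      using X unfolding \<B>_def filter_generated_def by blast+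
    have "conc_sets E smul B X \<subseteq> S"
      using conc_sets_mono[of X "\<lambda>_. S" B] XS conc_sets_const[OF S B] by blast
    moreover have "G' \<subseteq> conc_sets E smul B X" using G'(2) conc_sets_mono[of Gs X B] Gs(2) by blast
    moreover have "stable_set M E smul (conc_sets E smul B X)" by (rule stable_set_conc_sets[OF B Xs])
    ultimately show "conc_sets E smul B X \<in> \<B>"
      unfolding \<B>_def filter_generated_def using G'(1) by blast
  qed (simp add: \<B>_def)
  ultimately show ?thesis unfolding stable_filter_def by blast
qed

lemma stable_filter_chain_upper_bound:
  assumes S: "stable_set M E smul S" and ne: "\<K> \<noteq> {}"
    and K: "\<And>\<F>. \<F> \<in> \<K> \<Longrightarrow> stable_filter M E smul S \<F>"
    and chain: "\<And>\<F> \<G>. \<F> \<in> \<K> \<Longrightarrow> \<G> \<in> \<K> \<Longrightarrow> \<F> \<subseteq> \<G> \<or> \<G> \<subseteq> \<F>"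
  shows "\<exists>\<U>. stable_filter M E smul S \<U> \<and> (\<forall>\<F>\<in>\<K>. \<F> \<subseteq> \<U>)"
proof -
  define SK where "SK = {Y \<in> \<Union>\<K>. stable_set M E smul Y}"
  have SK: "\<And>Y. Y \<in> SK \<Longrightarrow> stable_set M E smul Y" "\<And>Y. Y \<in> SK \<Longrightarrow> Y \<subseteq> S"
    unfolding SK_def using K stable_filter_filter_on filter_on_subset by blast+
  have below: "\<exists>Y\<in>SK. Y \<subseteq> X" if "\<F> \<in> \<K>" "X \<in> \<F>" for \<F> X
    using stable_filter_stable_subset[OF K[OF that(1)] that(2)] that(1) unfolding SK_def by blast
  have "stable_filter M E smul S (filter_generated S (st M E smul SK))"
  proof (rule stable_filter_filter_generated[OF S])
    obtain \<F> where "\<F> \<in> \<K>" using ne by blast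
    then have "SK \<noteq> {}" using below K stable_filter_filter_on unfolding filter_on_def by blast
    then show "st M E smul SK \<noteq> {}" using mem_st SK(1) by blast
  next
    fix G assume "G \<in> st M E smul SK"
    then show "stable_set M E smul G" "G \<subseteq> S"
      using stable_set_st[OF SK(1)] st_member_subset[OF S SK(2)] by blast+
  next
    fix G1 G2 assume G: "G1 \<in> st M E smul SK" "G2 \<in> st M E smul SK"
    have directed: "\<exists>Y3\<in>SK. Y3 \<subseteq> Y1 \<inter> Y2" if Y: "Y1 \<in> SK" "Y2 \<in> SK" for Y1 Y2
    proof -
      obtain \<F>1 \<F>2 where F: "\<F>1 \<in> \<K>" "Y1 \<in> \<F>1" "\<F>2 \<in> \<K>" "Y2 \<in> \<F>2"
        using Y unfolding SK_def by blast
      obtain \<F> where "\<F> \<in> \<K>" "Y1 \<in> \<F>" "Y2 \<in> \<F>" using chain[OF F(1,3)] F by blast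
      moreover then have "Y1 \<inter> Y2 \<in> \<F>"
        using K stable_filter_filter_on filter_on_Int by blast
      ultimately show ?thesis using below by blast
    qed
    show "\<exists>G3\<in>st M E smul SK. G3 \<subseteq> G1 \<inter> G2" by (rule st_directed[OF SK(1) directed G])
  next
    fix B :: "nat \<Rightarrow> 'w set" and Gs :: "nat \<Rightarrow> 'e set"
    assume "meas_partition M B" "\<And>n. Gs n \<in> st M E smul SK"
    then show "\<exists>G\<in>st M E smul SK. G \<subseteq> conc_sets E smul B Gs"
      using conc_sets_st[OF SK(1)] by blast
  qed
  moreover have "\<F> \<subseteq> filter_generated S (st M E smul SK)" if F: "\<F> \<in> \<K>" for \<F>
  proof
    fix X assume X: "X \<in> \<F>"
    obtain Y where "Y \<in> SK" "Y \<subseteq> X" using below[OF F X] by blast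
    moreover have "X \<subseteq> S" by (rule filter_on_subset[OF stable_filter_filter_on[OF K[OF F]] X])
    ultimately show "X \<in> filter_generated S (st M E smul SK)"
      unfolding filter_generated_def using mem_st SK(1) by blast
  qed
  ultimately show ?thesis by blast
qed

lemma stable_filter_fin_sub_family:
  assumes S: "stable_set M E smul S" and \<O>: "stable_coll M E smul \<O>"
    and \<Phi>: "\<And>A Os. fin_sub_index \<O> A Os \<Longrightarrow> stable_set M E smul (\<Phi> A Os) \<and> \<Phi> A Os \<subseteq> S"
    and antimono: "\<And>A1 Os1 A2 Os2. fin_sub A1 Os1 \<subseteq> fin_sub A2 Os2 \<Longrightarrow> \<Phi> A2 Os2 \<subseteq> \<Phi> A1 Os1"
    and conc: "\<And>B A Os. meas_partition M B \<Longrightarrow> (\<And>n. fin_sub_index \<O> (A n) (Os n)) \<Longrightarrow>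
      \<exists>A' Os'. fin_sub_index \<O> A' Os' \<and> \<Phi> A' Os' \<subseteq> conc_sets E smul B (\<lambda>n. \<Phi> (A n) (Os n))"
  shows "stable_filter M E smul S (filter_generated S {\<Phi> A Os | A Os. fin_sub_index \<O> A Os})"
proof (rule stable_filter_filter_generated[OF S])
  have "meas_partition M (bipartition {})" by (rule meas_partition_bipartition) simp
  then show "{\<Phi> A Os | A Os. fin_sub_index \<O> A Os} \<noteq> {}"
    using fin_sub_index_const[OF \<O>] stable_coll_nonempty[OF \<O>] by blast
next
  fix G assume "G \<in> {\<Phi> A Os | A Os. fin_sub_index \<O> A Os}"
  then show "stable_set M E smul G" "G \<subseteq> S" using \<Phi> by blast+
next
  fix G1 G2 assume "G1 \<in> {\<Phi> A Os | A Os. fin_sub_index \<O> A Os}" "G2 \<in> {\<Phi> A Os | A Os. fin_sub_index \<O> A Os}"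
  then obtain A1 Os1 A2 Os2 where d: "fin_sub_index \<O> A1 Os1" "fin_sub_index \<O> A2 Os2"
    and G: "G1 = \<Phi> A1 Os1" "G2 = \<Phi> A2 Os2" by blast
  obtain A3 Os3 where d3: "fin_sub_index \<O> A3 Os3"
    and sub: "fin_sub A1 Os1 \<subseteq> fin_sub A3 Os3" "fin_sub A2 Os2 \<subseteq> fin_sub A3 Os3"
    by (rule fin_sub_common_refinement[OF \<O> d])
  have "\<Phi> A3 Os3 \<in> {\<Phi> A Os | A Os. fin_sub_index \<O> A Os}" using d3 by blast
  moreover have "\<Phi> A3 Os3 \<subseteq> G1 \<inter> G2" unfolding G using antimono[OF sub(1)] antimono[OF sub(2)] by blast
  ultimately show "\<exists>G3\<in>{\<Phi> A Os | A Os. fin_sub_index \<O> A Os}. G3 \<subseteq> G1 \<inter> G2" by blast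
next
  fix B :: "nat \<Rightarrow> 'w set" and Gs :: "nat \<Rightarrow> 'e set"
  assume B: "meas_partition M B" and Gs: "\<And>n. Gs n \<in> {\<Phi> A Os | A Os. fin_sub_index \<O> A Os}"
  have "\<forall>n. \<exists>A Os. fin_sub_index \<O> A Os \<and> Gs n = \<Phi> A Os" using Gs by blast
  then obtain A Os where d: "\<And>n. fin_sub_index \<O> (A n) (Os n)" and G: "\<And>n. Gs n = \<Phi> (A n) (Os n)"
    by metis
  have "Gs = (\<lambda>n. \<Phi> (A n) (Os n))" using G by (intro ext) simp
  moreover obtain A' Os' where "fin_sub_index \<O> A' Os'"
    "\<Phi> A' Os' \<subseteq> conc_sets E smul B (\<lambda>n. \<Phi> (A n) (Os n))"
    using conc[of B A Os, OF B d] by blast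
  ultimately show "\<exists>G\<in>{\<Phi> A Os | A Os. fin_sub_index \<O> A Os}. G \<subseteq> conc_sets E smul B Gs"
    by blast
qed

lemma exists_stable_ultrafilter_superset:
  assumes S: "stable_set M E smul S" and F0: "stable_filter M E smul S \<F>0"
  shows "\<exists>\<U>. stable_ultrafilter M E smul S \<U> \<and> \<F>0 \<subseteq> \<U>"
proof -
  define Z where "Z = {\<G>. stable_filter M E smul S \<G> \<and> \<F>0 \<subseteq> \<G>}"
  have "\<forall>\<K>\<in>chains Z. \<exists>\<U>\<in>Z. \<forall>\<F>\<in>\<K>. \<F> \<subseteq> \<U>"
  proof
    fix \<K> assume K: "\<K> \<in> chains Z"
    show "\<exists>\<U>\<in>Z. \<forall>\<F>\<in>\<K>. \<F> \<subseteq> \<U>"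
    proof (cases "\<K> = {}")
      case True
      then show ?thesis using F0 unfolding Z_def by blast
    next
      case False
      have KZ: "\<K> \<subseteq> Z" and chain: "\<And>\<F> \<G>. \<F> \<in> \<K> \<Longrightarrow> \<G> \<in> \<K> \<Longrightarrow> \<F> \<subseteq> \<G> \<or> \<G> \<subseteq> \<F>"
        using K unfolding chains_def chain_subset_def by blast+
      obtain \<U> where "stable_filter M E smul S \<U>" "\<forall>\<F>\<in>\<K>. \<F> \<subseteq> \<U>"
        using stable_filter_chain_upper_bound[OF S False _ chain] KZ unfolding Z_def by blast
      moreover have "\<F>0 \<subseteq> \<U>" using False KZ calculation(2) unfolding Z_def by blast
      ultimately show ?thesis unfolding Z_def by blast
    qed
  qed
  from Zorn_Lemma2[OF this] obtain \<U> where "\<U> \<in> Z" "\<forall>\<G>\<in>Z. \<U> \<subseteq> \<G> \<longrightarrow> \<G> = \<U>" by blast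
  then show ?thesis unfolding Z_def stable_ultrafilter_def by blast
qed

end

section \<open>Stable topologies\<close>

locale stable_top_subset = stable_L0_module M E zero add smul
  for M :: "'w measure" and E :: "'e set" and zero add smul +
  fixes S :: "'e set" and T :: "'e topology" and Bs :: "'e set set"
  assumes stable_S: "stable_set M E smul S"
    and topspace_T: "topspace T = S"
    and stable_base: "stable_coll M E smul Bs"
    and base_open: "\<And>B. B \<in> Bs \<Longrightarrow> openin T B"
    and base_generates: "\<And>U. openin T U \<Longrightarrow> \<exists>\<U>\<subseteq>Bs. U = \<Union>\<U>"
begin

lemma S_subset_carrier: "S \<subseteq> E"
  by (rule stable_set_subset[OF stable_S])

lemma base_subset_S: "B \<in> Bs \<Longrightarrow> B \<subseteq> S"
  using base_open openin_subset topspace_T by blast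

lemma stable_set_base: "B \<in> Bs \<Longrightarrow> stable_set M E smul B"
  by (rule stable_coll_stable_set[OF stable_base])

lemma openin_base: "openin T U \<Longrightarrow> x \<in> U \<Longrightarrow> \<exists>B\<in>Bs. x \<in> B \<and> B \<subseteq> U"
  using base_generates by blast

lemma base_nbhd: "x \<in> S \<Longrightarrow> \<exists>B\<in>Bs. x \<in> B"
  using openin_base[OF openin_topspace[of T]] topspace_T by blast

lemma conc_sets_subset_S:
  "meas_partition M A \<Longrightarrow> (\<And>k. Y k \<subseteq> S) \<Longrightarrow> conc_sets E smul A Y \<subseteq> S"
  using conc_sets_mono[of Y "\<lambda>_. S" A] conc_sets_const[OF stable_S] by blast

lemma paste_mem_S: "D \<in> sets M \<Longrightarrow> x \<in> S \<Longrightarrow> y \<in> S \<Longrightarrow> paste D x y \<in> S"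
  using paste_mem[OF _ _ _ stable_S] S_subset_carrier agree_on_refl by blast

lemma base_nbhd_transfer:
  assumes U: "U \<in> Bs" and z: "z \<in> U" and x: "x \<in> S" and D: "D \<in> sets M" and xz: "agree_on D x z"
  shows "\<exists>U'\<in>Bs. x \<in> U' \<and> (\<forall>u'\<in>U'. \<exists>u\<in>U. agree_on D u' u)"
proof -
  obtain V where V: "V \<in> Bs" "x \<in> V" using base_nbhd[OF x] by blast
  define Y where "Y k = (if k = Suc 0 then U else V)" for k
  have YB: "\<And>k. Y k \<in> Bs" using U V unfolding Y_def by simp
  have YE: "\<And>k. Y k \<subseteq> E" using YB base_subset_S S_subset_carrier by blast
  have P: "meas_partition M (bipartition D)" by (rule meas_partition_bipartition[OF D])
  note mem = mem_conc_sets[of "bipartition D" Y, OF P YE]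
  let ?U' = "conc_sets E smul (bipartition D) Y"
  have "?U' \<in> Bs" by (rule stable_coll_conc_sets[OF stable_base P YB])
  moreover have "x \<in> ?U'"
  proof -
    have "\<exists>y\<in>Y k. agree_on (bipartition D k) x y" for k
    proof (cases "k = Suc 0")
      case True
      then show ?thesis using z xz unfolding Y_def by auto
    next
      case False
      then show ?thesis using V(2) agree_on_refl unfolding Y_def by (intro bexI[of _ x]) auto
    qed
    then show ?thesis using x S_subset_carrier mem by blast
  qed
  moreover have "\<exists>u\<in>U. agree_on D u' u" if "u' \<in> ?U'" for u'
  proof -
    have "\<exists>y\<in>Y (Suc 0). agree_on (bipartition D (Suc 0)) u' y" using that mem by blast
    then show ?thesis unfolding Y_def by simp
  qed
  ultimately show ?thesis by blast
qed

lemma in_closure_iff: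
  assumes "Y \<subseteq> S"
  shows "x \<in> T closure_of Y \<longleftrightarrow> x \<in> S \<and> (\<forall>B\<in>Bs. x \<in> B \<longrightarrow> B \<inter> Y \<noteq> {})"
proof
  assume "x \<in> T closure_of Y"
  then show "x \<in> S \<and> (\<forall>B\<in>Bs. x \<in> B \<longrightarrow> B \<inter> Y \<noteq> {})"
    using base_open topspace_T unfolding in_closure_of by blast
next
  assume x: "x \<in> S \<and> (\<forall>B\<in>Bs. x \<in> B \<longrightarrow> B \<inter> Y \<noteq> {})"
  show "x \<in> T closure_of Y"
    unfolding in_closure_of
  proof (intro conjI allI impI)
    show "x \<in> topspace T" using x topspace_T by simp
    fix U assume "x \<in> U \<and> openin T U"
    then obtain B where "B \<in> Bs" "x \<in> B" "B \<subseteq> U" using openin_base by blast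
    then show "\<exists>y. y \<in> Y \<and> y \<in> U" using x by blast
  qed
qed

lemma closure_subset_S: "T closure_of Y \<subseteq> S"
  using closure_of_subset_topspace[of T Y] topspace_T by simp

lemma paste_mem_closure:
  assumes A: "meas_partition M A" and Ys: "stable_set M E smul (Y k)" and YS: "\<And>k. Y k \<subseteq> S"
    and z: "z \<in> T closure_of (conc_sets E smul A Y)" and p: "p \<in> Y k"
  shows "paste (A k) z p \<in> T closure_of (Y k)"
proof -
  have YE: "\<And>k. Y k \<subseteq> E" using YS S_subset_carrier by blast
  have CS: "conc_sets E smul A Y \<subseteq> S" by (rule conc_sets_subset_S[OF A YS])
  have Ak: "A k \<in> sets M" by (rule meas_partition_sets[OF A])
  have zS: "z \<in> S" using z closure_subset_S by blast
  have pS: "p \<in> S" using p YS by blast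
  have E: "z \<in> E" "p \<in> E" using zS pS S_subset_carrier by blast+
  show ?thesis
    unfolding in_closure_iff[OF YS]
  proof (intro conjI ballI impI paste_mem_S[OF Ak zS pS])
    fix U assume U: "U \<in> Bs" "paste (A k) z p \<in> U"
    have "agree_on (A k) z (paste (A k) z p)"
      using agree_on_paste_inside[OF Ak E] agree_on_commute by blast
    then obtain U' where U': "U' \<in> Bs" "z \<in> U'" "\<forall>u'\<in>U'. \<exists>u\<in>U. agree_on (A k) u' u"
      using base_nbhd_transfer[OF U zS Ak] by blast
    obtain w where w: "w \<in> U'" "w \<in> conc_sets E smul A Y"
      using z U' unfolding in_closure_iff[OF CS] by blast
    have wE: "w \<in> E" using w(2) CS S_subset_carrier by blast
    have "paste (A k) w p \<in> Y k"
    proof (rule paste_mem[OF Ak wE E(2) Ys])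
      show "\<exists>v\<in>Y k. agree_on (A k) w v" using w(2) mem_conc_sets[of A Y, OF A YE] by blast
      show "\<exists>v\<in>Y k. agree_on (space M - A k) p v" using p by (intro bexI[of _ p]) simp_all
    qed
    moreover have "paste (A k) w p \<in> U"
    proof (rule paste_mem[OF Ak wE E(2) stable_set_base[OF U(1)]])
      show "\<exists>v\<in>U. agree_on (A k) w v" using U'(3) w(1) by blast
      show "\<exists>v\<in>U. agree_on (space M - A k) p v"
        using U(2) agree_on_paste_outside[OF Ak E] agree_on_commute by blast
    qed
    ultimately show "U \<inter> Y k \<noteq> {}" by blast
  qed
qed

lemma conc_sets_closure_subset:
  assumes A: "meas_partition M A" and YS: "\<And>k. Y k \<subseteq> S"
  shows "conc_sets E smul A (\<lambda>k. T closure_of (Y k)) \<subseteq> T closure_of (conc_sets E smul A Y)"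
proof
  fix z assume z: "z \<in> conc_sets E smul A (\<lambda>k. T closure_of (Y k))"
  have YE: "\<And>k. Y k \<subseteq> E" using YS S_subset_carrier by blast
  have clE: "\<And>k. T closure_of (Y k) \<subseteq> E" using closure_subset_S S_subset_carrier by blast
  have Ak: "\<And>k. A k \<in> sets M" by (rule meas_partition_sets[OF A])
  have zS: "z \<in> S" using conc_sets_subset_S[OF A closure_subset_S] z by blast
  obtain xs where xs: "\<And>k. xs k \<in> T closure_of (Y k)" "\<And>k. agree_on (A k) z (xs k)"
    using z mem_conc_sets[of A "\<lambda>k. T closure_of (Y k)", OF A clE] by metis
  show "z \<in> T closure_of (conc_sets E smul A Y)"
    unfolding in_closure_iff[OF conc_sets_subset_S[OF A YS]]
  proof (intro conjI ballI impI zS)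
    fix U assume U: "U \<in> Bs" "z \<in> U"
    have "\<exists>y u. y \<in> Y k \<and> u \<in> U \<and> agree_on (A k) y u" for k
    proof -
      have xk: "xs k \<in> S" using xs(1) closure_subset_S by blast
      obtain U' where U': "U' \<in> Bs" "xs k \<in> U'" "\<forall>u'\<in>U'. \<exists>u\<in>U. agree_on (A k) u' u"
        using base_nbhd_transfer[OF U xk Ak] xs(2) agree_on_commute by blast
      obtain y where "y \<in> U'" "y \<in> Y k" using xs(1)[of k] U' unfolding in_closure_iff[OF YS] by blast
      then show ?thesis using U'(3) by blast
    qed
    then obtain ys us where ys: "\<And>k. ys k \<in> Y k" "\<And>k. us k \<in> U" "\<And>k. agree_on (A k) (ys k) (us k)"
      by metis
    have ysE: "\<And>k. ys k \<in> E" using ys(1) YE by blast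
    have "conc E smul A ys \<in> U"
    proof (rule mem_stable_set_if_local[OF stable_set_base[OF U(1)] A conc_in_carrier[OF A ysE]])
      fix k show "\<exists>v\<in>U. agree_on (A k) (conc E smul A ys) v"
        using agree_on_conc[of A ys k, OF A ysE] ys(2,3) agree_on_trans by blast
    qed
    moreover have "conc E smul A ys \<in> conc_sets E smul A Y" by (rule conc_mem_conc_sets) (rule ys(1))
    ultimately show "U \<inter> conc_sets E smul A Y \<noteq> {}" by blast
  qed
qed

lemma closure_conc_sets:
  assumes A: "meas_partition M A" and Ys: "\<And>k. stable_set M E smul (Y k)" and YS: "\<And>k. Y k \<subseteq> S"
  shows "T closure_of (conc_sets E smul A Y) = conc_sets E smul A (\<lambda>k. T closure_of (Y k))"
proof
  have clE: "\<And>k. T closure_of (Y k) \<subseteq> E" using closure_subset_S S_subset_carrier by blast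
  show "T closure_of (conc_sets E smul A Y) \<subseteq> conc_sets E smul A (\<lambda>k. T closure_of (Y k))"
  proof
    fix z assume z: "z \<in> T closure_of (conc_sets E smul A Y)"
    have zE: "z \<in> E" using z closure_subset_S S_subset_carrier by blast
    have "\<exists>x\<in>T closure_of (Y k). agree_on (A k) z x" for k
    proof -
      obtain p where p: "p \<in> Y k" using stable_set_nonempty[OF Ys] by blast
      have "p \<in> E" using p YS S_subset_carrier by blast
      then have "agree_on (A k) z (paste (A k) z p)"
        using agree_on_paste_inside[OF meas_partition_sets[OF A] zE] agree_on_commute by blast
      then show ?thesis using paste_mem_closure[OF A Ys YS z p] by blast
    qed
    then show "z \<in> conc_sets E smul A (\<lambda>k. T closure_of (Y k))"
      using zE mem_conc_sets[of A "\<lambda>k. T closure_of (Y k)", OF A clE] by blast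
  qed
qed (rule conc_sets_closure_subset[OF A YS])

lemma stable_set_closure:
  assumes Y: "stable_set M E smul Y" and YS: "Y \<subseteq> S"
  shows "stable_set M E smul (T closure_of Y)"
proof -
  have "T closure_of Y \<noteq> {}"
    using stable_set_nonempty[OF Y] closure_of_subset[of Y T] YS topspace_T by auto
  moreover have "T closure_of Y \<subseteq> E" using closure_subset_S S_subset_carrier by blast
  moreover have "conc E smul A xs \<in> T closure_of Y"
    if A: "meas_partition M A" and xs: "\<And>k. xs k \<in> T closure_of Y" for A xs
  proof -
    have "conc E smul A xs \<in> conc_sets E smul A (\<lambda>k. T closure_of Y)"
      by (rule conc_mem_conc_sets) (rule xs)
    also have "\<dots> = T closure_of (conc_sets E smul A (\<lambda>_. Y))"
      by (rule closure_conc_sets[symmetric, OF A]) (use Y YS in auto)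
    also have "\<dots> = T closure_of Y" using conc_sets_const[OF Y A] by simp
    finally show ?thesis .
  qed
  ultimately show ?thesis unfolding stable_set_def by blast
qed

section \<open>Compactness by closed sets\<close>

lemma stable_coll_closures:
  assumes \<B>: "stable_coll M E smul \<B>" and BS: "\<And>b. b \<in> \<B> \<Longrightarrow> b \<subseteq> S"
  shows "stable_coll M E smul ((\<lambda>b. T closure_of b) ` \<B>)"
  unfolding stable_coll_def
proof (intro conjI allI impI ballI)
  have Bs: "\<And>b. b \<in> \<B> \<Longrightarrow> stable_set M E smul b" by (rule stable_coll_stable_set[OF \<B>])
  show "(\<lambda>b. T closure_of b) ` \<B> \<noteq> {}" using stable_coll_nonempty[OF \<B>] by blast
  show "stable_set M E smul C" if "C \<in> (\<lambda>b. T closure_of b) ` \<B>" for C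
    using that stable_set_closure Bs BS by blast
  fix A :: "nat \<Rightarrow> 'w set" and Y :: "nat \<Rightarrow> 'e set"
  assume h: "meas_partition M A \<and> (\<forall>k. Y k \<in> (\<lambda>b. T closure_of b) ` \<B>)"
  then have A: "meas_partition M A" by blast
  have "\<forall>k. \<exists>b. b \<in> \<B> \<and> Y k = T closure_of b" using h by blast
  then obtain b where b: "\<And>k. b k \<in> \<B>" "\<And>k. Y k = T closure_of (b k)" by metis
  have "Y = (\<lambda>k. T closure_of (b k))" using b(2) by (intro ext) simp
  then have "conc_sets E smul A Y = T closure_of (conc_sets E smul A b)"
    using closure_conc_sets[OF A, of b] Bs BS b(1) by simp
  moreover have "conc_sets E smul A b \<in> \<B>" by (rule stable_coll_conc_sets[OF \<B> A b(1)])
  ultimately show "conc_sets E smul A Y \<in> (\<lambda>b. T closure_of b) ` \<B>" by blast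
qed

lemma Inter_fin_sub_closures_nonempty:
  assumes F: "filter_on S \<F>" and \<B>: "stable_coll M E smul \<B>" "filter_base \<F> \<B>"
    and d: "fin_sub_index ((\<lambda>b. T closure_of b) ` \<B>) A Os"
  shows "\<Inter>(fin_sub A Os) \<noteq> {}"
proof -
  have BF: "\<B> \<subseteq> \<F>" using \<B>(2) unfolding filter_base_def by blast
  have BS: "\<And>b. b \<in> \<B> \<Longrightarrow> b \<subseteq> S" using BF filter_on_subset[OF F] by blast
  have "\<exists>y. y \<in> E \<and> (\<forall>C\<in>Os k. y \<in> C)" for k
  proof -
    have Osk: "finite (Os k)" "Os k \<noteq> {}" "Os k \<subseteq> (\<lambda>b. T closure_of b) ` \<B>"
      using d unfolding fin_sub_index_def by auto
    then have "\<forall>C\<in>Os k. \<exists>b. b \<in> \<B> \<and> C = T closure_of b" by blast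
    from bchoice[OF this] obtain g where g: "\<And>C. C \<in> Os k \<Longrightarrow> g C \<in> \<B> \<and> C = T closure_of (g C)"
      by blast
    have "\<Inter>(g ` Os k) \<in> \<F>" by (rule filter_on_Inter[OF F]) (use Osk g BF in auto)
    then obtain b' where b': "b' \<in> \<B>" "b' \<subseteq> \<Inter>(g ` Os k)"
      using \<B>(2) unfolding filter_base_def by blast
    obtain y where y: "y \<in> b'" using stable_set_nonempty[OF stable_coll_stable_set[OF \<B>(1) b'(1)]] by blast
    have "y \<in> C" if C: "C \<in> Os k" for C
    proof -
      have "g C \<subseteq> T closure_of (g C)"
        using closure_of_subset[of "g C" T] BS[of "g C"] g[OF C] topspace_T by simp
      then show ?thesis using g[OF C] y b'(2) C by blast
    qed
    moreover have "y \<in> E" using y BS[OF b'(1)] S_subset_carrier by blast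
    ultimately show ?thesis by blast
  qed
  then obtain ys where ys: "\<And>k. ys k \<in> E" "\<And>k C. C \<in> Os k \<Longrightarrow> ys k \<in> C" by metis
  have OsE: "\<And>k C. C \<in> Os k \<Longrightarrow> C \<subseteq> E"
    using d closure_subset_S S_subset_carrier unfolding fin_sub_index_def by blast
  have "conc E smul A ys \<in> \<Inter>(fin_sub A Os)"
    by (rule conc_mem_Inter_fin_sub[OF fin_sub_index_partition[OF d] ys(1)]) (use ys(2) OsE in blast)
  then show ?thesis by blast
qed

lemma stable_compact_if_closed_fip:
  assumes fip: "\<forall>\<C>. stable_coll M E smul \<C> \<and> (\<forall>C\<in>\<C>. closedin T C) \<and>
                  (\<forall>\<C>'. stable_finite_sub M E smul \<C> \<C>' \<longrightarrow> \<Inter>\<C>' \<noteq> {}) \<longrightarrow> \<Inter>\<C> \<noteq> {}"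
  shows "stable_compact M E smul T S"
  unfolding stable_compact_def
proof (intro allI impI)
  fix \<F> assume sF: "stable_filter M E smul S \<F>"
  have F: "filter_on S \<F>" by (rule stable_filter_filter_on[OF sF])
  obtain \<B> where \<B>: "stable_coll M E smul \<B>" "filter_base \<F> \<B>"
    using sF unfolding stable_filter_def by blast
  have BS: "\<And>b. b \<in> \<B> \<Longrightarrow> b \<subseteq> S" using \<B>(2) filter_on_subset[OF F] unfolding filter_base_def by blast
  let ?\<C> = "(\<lambda>b. T closure_of b) ` \<B>"
  have "stable_coll M E smul ?\<C>" by (rule stable_coll_closures[OF \<B>(1) BS])
  moreover have "\<forall>C\<in>?\<C>. closedin T C" by auto
  moreover have "\<Inter>\<C>' \<noteq> {}" if sub: "stable_finite_sub M E smul ?\<C> \<C>'" for \<C>'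
    using Inter_fin_sub_closures_nonempty[OF F \<B>] stable_finite_sub_obtain[OF sub] by metis
  ultimately obtain x where x: "x \<in> \<Inter>?\<C>" using fip by blast
  have xS: "x \<in> S" using x stable_coll_nonempty[OF \<B>(1)] closure_subset_S by blast
  have "cluster_point T \<F> x"
    unfolding cluster_point_def
  proof (intro conjI allI impI)
    show "x \<in> topspace T" using xS topspace_T by simp
    fix U X assume h: "openin T U \<and> x \<in> U \<and> X \<in> \<F>"
    then obtain b where b: "b \<in> \<B>" "b \<subseteq> X" using \<B>(2) unfolding filter_base_def by blast
    have "x \<in> T closure_of b" using x b(1) by blast
    then show "U \<inter> X \<noteq> {}" using h b(2) unfolding in_closure_of by blast
  qed
  then show "\<exists>x\<in>S. cluster_point T \<F> x" using xS by blast
qed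

lemma closed_fip_if_stable_compact:
  assumes compact: "stable_compact M E smul T S"
    and \<C>: "stable_coll M E smul \<C>" and closed: "\<forall>C\<in>\<C>. closedin T C"
    and fip: "\<forall>\<C>'. stable_finite_sub M E smul \<C> \<C>' \<longrightarrow> \<Inter>\<C>' \<noteq> {}"
  shows "\<Inter>\<C> \<noteq> {}"
proof -
  have CS: "\<And>C. C \<in> \<C> \<Longrightarrow> C \<subseteq> S" using closed closedin_subset topspace_T by blast
  have fip': "\<And>A Os. fin_sub_index \<C> A Os \<Longrightarrow> \<Inter>(fin_sub A Os) \<noteq> {}"
    using fip stable_finite_sub_fin_sub[OF \<C>] by blast
  let ?\<G> = "{\<Inter>(fin_sub A Os) | A Os. fin_sub_index \<C> A Os}"
  have "stable_filter M E smul S (filter_generated S ?\<G>)"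
  proof (rule stable_filter_fin_sub_family[OF stable_S \<C>])
    fix A Os assume d: "fin_sub_index \<C> A Os"
    have "stable_set M E smul (\<Inter>(fin_sub A Os))"
      by (rule stable_set_Inter[OF stable_coll_nonempty stable_coll_stable_set fip'[OF d]])
         (use stable_coll_fin_sub[OF \<C> d] in blast)+
    moreover have "\<Inter>(fin_sub A Os) \<subseteq> S"
      using stable_coll_nonempty[OF stable_coll_fin_sub[OF \<C> d]] fin_sub_subset[OF \<C> d] CS by blast
    ultimately show "stable_set M E smul (\<Inter>(fin_sub A Os)) \<and> \<Inter>(fin_sub A Os) \<subseteq> S" ..
  next
    fix B :: "nat \<Rightarrow> 'w set" and A :: "nat \<Rightarrow> nat \<Rightarrow> 'w set" and Os :: "nat \<Rightarrow> nat \<Rightarrow> 'e set set"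
    assume "meas_partition M B" and d: "\<And>n. fin_sub_index \<C> (A n) (Os n)"
    then show "\<exists>A' Os'. fin_sub_index \<C> A' Os' \<and>
        \<Inter>(fin_sub A' Os') \<subseteq> conc_sets E smul B (\<lambda>n. \<Inter>(fin_sub (A n) (Os n)))"
      using Inter_fin_sub_conc[where A=A and Os=Os, OF \<C> _ d fip'[OF d]] by blast
  qed blast
  then obtain x where x: "x \<in> S" "cluster_point T (filter_generated S ?\<G>) x"
    using compact unfolding stable_compact_def by blast
  have "x \<in> C" if C: "C \<in> \<C>" for C
  proof (rule ccontr)
    assume "x \<notin> C"
    moreover have "openin T (S - C)" using closed C topspace_T unfolding closedin_def by auto
    moreover have "C \<in> filter_generated S ?\<G>"
    proof -
      have P: "meas_partition M (bipartition {})" by (rule meas_partition_bipartition) simp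
      have "C = \<Inter>(fin_sub (bipartition {}) (\<lambda>_. {C}))" using fin_sub_const[OF \<C> P C] by simp
      then have "C \<in> ?\<G>" using fin_sub_index_const[OF \<C> P C] by blast
      then show ?thesis unfolding filter_generated_def using CS[OF C] by blast
    qed
    ultimately show False using x unfolding cluster_point_def by blast
  qed
  then show ?thesis by blast
qed

section \<open>Compactness by open covers\<close>

definition cluster_on :: "'e set set \<Rightarrow> 'e \<Rightarrow> 'w set \<Rightarrow> bool" where
  "cluster_on \<B> x D \<longleftrightarrow> (\<forall>U\<in>Bs. x \<in> U \<longrightarrow> (\<forall>b\<in>\<B>. meets_on D U b))"

lemma cluster_on_empty: "stable_coll M E smul \<B> \<Longrightarrow> cluster_on \<B> x {}"
  unfolding cluster_on_def
  using meets_on_empty stable_set_nonempty stable_set_subset stable_set_base stable_coll_stable_set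
  by meson

lemma exists_cluster_on_Union:
  fixes D :: "nat \<Rightarrow> 'w set"
  assumes \<B>: "stable_coll M E smul \<B>" and D: "\<And>n. D n \<in> sets M" and x: "\<And>n. x n \<in> S"
    and cluster: "\<And>n. cluster_on \<B> (x n) (D n)"
  shows "\<exists>z\<in>S. cluster_on \<B> z (\<Union>n. D n)"
proof -
  have D': "\<And>n. disjointed D n \<in> sets M" using D sets.range_disjointed_sets by blast
  have xE: "\<And>n. x n \<in> E" using x S_subset_carrier by blast
  let ?z = "seq_glue D x"
  have zS: "?z \<in> S" by (rule seq_glue_mem[OF stable_S D x])
  have "cluster_on \<B> ?z (\<Union>n. D n)"
    unfolding cluster_on_def
  proof (intro ballI impI)
    fix U b assume U: "U \<in> Bs" "?z \<in> U" and b: "b \<in> \<B>"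
    have "\<exists>b'\<in>{b}. meets_on (disjointed D n) U b'" for n
    proof -
      have "agree_on (disjointed D n) (x n) ?z"
        using agree_on_seq_glue[where D=D and xs=x and n=n, OF D xE] agree_on_commute by blast
      then obtain U' where U': "U' \<in> Bs" "x n \<in> U'" "\<forall>u'\<in>U'. \<exists>u\<in>U. agree_on (disjointed D n) u' u"
        using base_nbhd_transfer[OF U x D'] by blast
      obtain u' y where u'y: "u' \<in> U'" "y \<in> b" "agree_on (D n) u' y"
        using cluster[of n] U' b unfolding cluster_on_def meets_on_def by blast
      obtain u where u: "u \<in> U" "agree_on (disjointed D n) u' u" using U'(3) u'y(1) by blast
      have "u' \<in> E" "y \<in> E"
        using u'y(1,2) base_subset_S[OF U'(1)] S_subset_carrier
          stable_set_subset[OF stable_coll_stable_set[OF \<B> b]] by blast+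
      then have "agree_on (disjointed D n) u' y"
        by (rule agree_on_subset[OF u'y(3) disjointed_subset D D'])
      then have "agree_on (disjointed D n) u y" using u(2) unfolding agree_on_def by simp
      then show ?thesis using u(1) u'y(2) unfolding meets_on_def by blast
    qed
    then have "\<exists>b'\<in>{b}. meets_on (\<Union>n. disjointed D n) U b'"
      by (rule meets_on_Union[OF stable_set_base[OF U(1)]
            stable_coll_singleton[OF stable_coll_stable_set[OF \<B> b]] D'])
    then show "meets_on (\<Union>n. D n) U b" by (simp add: UN_disjointed_eq)
  qed
  then show ?thesis using zS by blast
qed

lemma exists_apart_nbhd_Union:
  fixes D :: "nat \<Rightarrow> 'w set"
  assumes \<B>: "stable_coll M E smul \<B>" and D: "\<And>n. D n \<in> sets M"
    and apart: "\<And>n. \<exists>U\<in>Bs. x \<in> U \<and> (\<exists>b\<in>\<B>. apart_on (D n) U b)"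
  shows "\<exists>U\<in>Bs. x \<in> U \<and> (\<exists>b\<in>\<B>. apart_on (\<Union>n. D n) U b)"
proof -
  obtain Us bs where Us: "\<And>n. Us n \<in> Bs" "\<And>n. x \<in> Us n"
    and bs: "\<And>n. bs n \<in> \<B>" "\<And>n. apart_on (D n) (Us n) (bs n)"
    using apart by metis
  have UsE: "\<And>n. Us n \<subseteq> E" using Us(1) base_subset_S S_subset_carrier by blast
  have bsE: "\<And>n. bs n \<subseteq> E"
    using bs(1) stable_coll_stable_set[OF \<B>] stable_set_subset by blast
  have P: "meas_partition M (seq_partition D)" by (rule meas_partition_seq_partition[OF D])
  let ?U = "conc_sets E smul (seq_partition D) (\<lambda>m. Us (m - 1))"
  let ?b = "conc_sets E smul (seq_partition D) (\<lambda>m. bs (m - 1))"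
  have "?U \<in> Bs" by (rule stable_coll_conc_sets[OF stable_base P Us(1)])
  moreover have "?b \<in> \<B>" by (rule stable_coll_conc_sets[OF \<B> P bs(1)])
  moreover have "x \<in> ?U"
    using seq_glue_mem_conc_sets[of "\<lambda>_. x" Us D] Us(2) seq_glue_const[OF D] UsE Us(2) by force
  moreover have "apart_on (\<Union>n. D n) ?U ?b" by (rule apart_on_Union_seq[OF D UsE bsE bs(2)])
  ultimately show ?thesis by blast
qed

lemma exists_apart_nbhd:
  assumes \<B>: "stable_coll M E smul \<B>" and Q: "Q \<in> sets M" and x: "x \<in> S"
    and no_cluster: "\<And>Z. Z \<in> sets M \<Longrightarrow> Z \<subseteq> Q \<Longrightarrow> (\<exists>z\<in>S. cluster_on \<B> z Z) \<Longrightarrow> Z \<in> null_sets M"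
  shows "\<exists>U\<in>Bs. x \<in> U \<and> (\<exists>b\<in>\<B>. apart_on Q U b)"
proof -
  have BE: "\<And>b. b \<in> \<B> \<Longrightarrow> b \<subseteq> E" using stable_coll_stable_set[OF \<B>] stable_set_subset by blast
  have UE: "\<And>U. U \<in> Bs \<Longrightarrow> U \<subseteq> E" using base_subset_S S_subset_carrier by blast
  let ?P = "\<lambda>D. \<exists>U\<in>Bs. x \<in> U \<and> (\<exists>b\<in>\<B>. apart_on D U b)"
  have dichotomy: "?P Q \<or> (\<exists>Z\<in>sets M. Z \<subseteq> Q \<and> Z \<notin> null_sets M \<and> (\<forall>D\<in>sets M. D \<subseteq> Z \<longrightarrow> ?P D \<longrightarrow> D \<in> null_sets M))"
  proof (rule ess_local_dichotomy[OF _ _ _ Q])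
    show "?P {}" using base_nbhd[OF x] stable_coll_nonempty[OF \<B>] apart_on_empty by blast
    show "?P (\<Union>n. D n)" if "\<And>n. D n \<in> sets M" "\<And>n. ?P (D n)" for D :: "nat \<Rightarrow> 'w set"
      by (rule exists_apart_nbhd_Union[OF \<B> that])
    show "?P D'" if "D \<in> sets M" "D' \<in> sets M" "?P D" "D' - D \<in> null_sets M" for D D'
      using that apart_on_ae_superset BE UE by meson
  qed
  have no_piece: False if Z: "Z \<in> sets M" "Z \<subseteq> Q" "Z \<notin> null_sets M"
    and noP: "\<forall>D\<in>sets M. D \<subseteq> Z \<longrightarrow> ?P D \<longrightarrow> D \<in> null_sets M" for Z
  proof -
    have "cluster_on \<B> x Z"
      unfolding cluster_on_def
    proof (intro ballI impI)
      fix U b assume U: "U \<in> Bs" "x \<in> U" and b: "b \<in> \<B>"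
      have bs: "stable_coll M E smul {b}" by (rule stable_coll_singleton[OF stable_coll_stable_set[OF \<B> b]])
      show "meets_on Z U b"
      proof (rule ccontr)
        assume "\<not> meets_on Z U b"
        then obtain Z' where "Z' \<in> sets M" "Z' \<subseteq> Z" "Z' \<notin> null_sets M" "apart_on Z' U b"
          using meets_on_or_apart_on_piece[OF stable_set_base[OF U(1)] bs Z(1)] by auto
        then show False using noP U b by blast
      qed
    qed
    then show False using no_cluster[OF Z(1,2)] x Z(3) by blast
  qed
  show ?thesis
  proof (rule ccontr)
    assume "\<not> ?P Q"
    then obtain Z where "Z \<in> sets M" "Z \<subseteq> Q" "Z \<notin> null_sets M"
      "\<forall>D\<in>sets M. D \<subseteq> Z \<longrightarrow> ?P D \<longrightarrow> D \<in> null_sets M"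
      using dichotomy by blast
    then show False by (rule no_piece)
  qed
qed

lemma not_covered_by_fin_sub_of_apart:
  assumes F: "filter_on S \<F>" and \<B>: "stable_coll M E smul \<B>" "filter_base \<F> \<B>"
    and Q: "Q \<in> sets M" "Q \<notin> null_sets M"
    and \<O>: "\<And>U. U \<in> \<O> \<Longrightarrow> U \<in> Bs \<and> (\<exists>b\<in>\<B>. apart_on Q U b)"
    and d: "fin_sub_index \<O> A Os"
  shows "\<not> S \<subseteq> \<Union>(fin_sub A Os)"
proof
  assume cover: "S \<subseteq> \<Union>(fin_sub A Os)"
  have A: "meas_partition M A" by (rule fin_sub_index_partition[OF d])
  have BF: "\<B> \<subseteq> \<F>" using \<B>(2) unfolding filter_base_def by blast
  have BE: "\<And>b. b \<in> \<B> \<Longrightarrow> b \<subseteq> E" using stable_coll_stable_set[OF \<B>(1)] stable_set_subset by blast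
  have "\<forall>U\<in>\<O>. \<exists>b. b \<in> \<B> \<and> apart_on Q U b" using \<O> by blast
  from bchoice[OF this] obtain g where g: "\<forall>U\<in>\<O>. g U \<in> \<B> \<and> apart_on Q U (g U)" by blast
  have "\<exists>b. b \<in> \<B> \<and> (\<forall>U\<in>Os k. b \<subseteq> g U)" for k
  proof -
    have Osk: "finite (Os k)" "Os k \<noteq> {}" "Os k \<subseteq> \<O>" using d unfolding fin_sub_index_def by auto
    have "\<Inter>(g ` Os k) \<in> \<F>" by (rule filter_on_Inter[OF F]) (use Osk g BF in auto)
    then obtain b' where "b' \<in> \<B>" "b' \<subseteq> \<Inter>(g ` Os k)"
      using \<B>(2) unfolding filter_base_def by blast
    then show ?thesis by blast
  qed
  then obtain b where b: "\<And>k. b k \<in> \<B>" "\<And>k U. U \<in> Os k \<Longrightarrow> b k \<subseteq> g U" by metis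
  have bE: "\<And>k. b k \<subseteq> E" using b(1) BE by blast
  have cb: "conc_sets E smul A b \<in> \<B>" by (rule stable_coll_conc_sets[OF \<B>(1) A b(1)])
  obtain y where y: "y \<in> conc_sets E smul A b"
    using stable_set_nonempty[OF stable_coll_stable_set[OF \<B>(1) cb]] by blast
  obtain W where W: "W \<in> fin_sub A Os" "y \<in> W"
    using y cover BF cb filter_on_subset[OF F] by blast
  obtain V where V: "W = conc_sets E smul A V" "\<And>k. V k \<in> st M E smul (Os k)"
    using W(1) unfolding fin_sub_def by blast
  have OsE: "\<And>k U. U \<in> Os k \<Longrightarrow> U \<subseteq> E"
    using d \<O> base_subset_S S_subset_carrier unfolding fin_sub_index_def by blast
  have "apart_on Q (conc_sets E smul A V) (conc_sets E smul A b)"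
  proof (rule apart_on_conc_sets[OF A Q(1)])
    show "V k \<subseteq> E" for k by (rule st_member_subset[OF stable_set_carrier OsE V(2)])
    show "b k \<subseteq> E" for k by (rule bE)
    have VA: "apart_on Q (V k) (b k)" for k
    proof (rule apart_on_st[OF Q(1) bE _ V(2)])
      fix U assume U: "U \<in> Os k"
      have "U \<in> \<O>" using d U unfolding fin_sub_index_def by blast
      then show "U \<subseteq> E \<and> apart_on Q U (b k)"
        using OsE[OF U] g b(2)[OF U] apart_on_mono[of Q U "g U" Q U "b k"] by blast
    qed
    show "apart_on (Q \<inter> A k) (V k) (b k)" for k
      by (rule apart_on_mono[OF VA]) auto
  qed
  then show False using null_if_apart_on_self[OF _ Q(1)] W(2) V(1) y Q(2) by blast
qed

lemma cluster_point_if_cluster_on_ae: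
  assumes \<B>: "filter_base \<F> \<B>" "\<And>b. b \<in> \<B> \<Longrightarrow> b \<subseteq> E"
    and x: "x \<in> S" and H: "H \<in> sets M" "space M - H \<in> null_sets M" and cluster: "cluster_on \<B> x H"
  shows "cluster_point T \<F> x"
  unfolding cluster_point_def
proof (intro conjI allI impI)
  show "x \<in> topspace T" using x topspace_T by simp
  fix U X assume h: "openin T U \<and> x \<in> U \<and> X \<in> \<F>"
  obtain B where B: "B \<in> Bs" "x \<in> B" "B \<subseteq> U" using openin_base h by blast
  obtain b where b: "b \<in> \<B>" "b \<subseteq> X" using \<B>(1) h unfolding filter_base_def by blast
  obtain u y where uy: "u \<in> B" "y \<in> b" "agree_on H u y"
    using cluster B b(1) unfolding cluster_on_def meets_on_def by blast
  have "u \<in> E" "y \<in> E" using uy(1,2) base_subset_S[OF B(1)] S_subset_carrier \<B>(2)[OF b(1)] by blast+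
  then have "u = y" by (rule eq_if_agree_on_ae[OF uy(3) H])
  then show "U \<inter> X \<noteq> {}" using uy B b by blast
qed

lemma stable_coll_apart_base:
  assumes \<B>: "stable_coll M E smul \<B>" and Q: "Q \<in> sets M"
    and ne: "\<exists>U\<in>Bs. \<exists>b\<in>\<B>. apart_on Q U b"
  shows "stable_coll M E smul {U \<in> Bs. \<exists>b\<in>\<B>. apart_on Q U b}"
  unfolding stable_coll_def
proof (intro conjI ballI allI impI)
  show "{U \<in> Bs. \<exists>b\<in>\<B>. apart_on Q U b} \<noteq> {}" using ne by blast
  fix U assume "U \<in> {U \<in> Bs. \<exists>b\<in>\<B>. apart_on Q U b}"
  then show "stable_set M E smul U" using stable_set_base by blast
next
  fix A :: "nat \<Rightarrow> 'w set" and Y :: "nat \<Rightarrow> 'e set"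
  assume "meas_partition M A \<and> (\<forall>k. Y k \<in> {U \<in> Bs. \<exists>b\<in>\<B>. apart_on Q U b})"
  then have A: "meas_partition M A" and YB: "\<And>k. Y k \<in> Bs" and "\<forall>k. \<exists>b\<in>\<B>. apart_on Q (Y k) b"
    by auto
  then obtain bs where bs: "\<And>k. bs k \<in> \<B>" "\<And>k. apart_on Q (Y k) (bs k)" by metis
  have YE: "\<And>k. Y k \<subseteq> E" using YB base_subset_S S_subset_carrier by blast
  have bsE: "\<And>k. bs k \<subseteq> E" using bs(1) stable_coll_stable_set[OF \<B>] stable_set_subset by blast
  have "apart_on Q (conc_sets E smul A Y) (conc_sets E smul A bs)"
  proof (rule apart_on_conc_sets[OF A Q YE bsE])
    show "apart_on (Q \<inter> A k) (Y k) (bs k)" for k by (rule apart_on_mono[OF bs(2)]) auto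
  qed
  moreover have "conc_sets E smul A Y \<in> Bs" by (rule stable_coll_conc_sets[OF stable_base A YB])
  moreover have "conc_sets E smul A bs \<in> \<B>" by (rule stable_coll_conc_sets[OF \<B> A bs(1)])
  ultimately show "conc_sets E smul A Y \<in> {U \<in> Bs. \<exists>b\<in>\<B>. apart_on Q U b}" by blast
qed

lemma stable_compact_if_open_cover:
  assumes cover: "\<forall>\<O>. stable_coll M E smul \<O> \<and> (\<forall>V\<in>\<O>. openin T V) \<and> S = \<Union>\<O> \<longrightarrow>
               (\<exists>\<O>'. stable_finite_sub M E smul \<O> \<O>' \<and> S = \<Union>\<O>')"
  shows "stable_compact M E smul T S"
  unfolding stable_compact_def
proof (intro allI impI)
  fix \<F> assume sF: "stable_filter M E smul S \<F>"
  have F: "filter_on S \<F>" by (rule stable_filter_filter_on[OF sF])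
  obtain \<B> where \<B>: "stable_coll M E smul \<B>" "filter_base \<F> \<B>"
    using sF unfolding stable_filter_def by blast
  have BE: "\<And>b. b \<in> \<B> \<Longrightarrow> b \<subseteq> E" using stable_coll_stable_set[OF \<B>(1)] stable_set_subset by blast
  show "\<exists>x\<in>S. cluster_point T \<F> x"
  proof (rule ccontr)
    assume no_cluster: "\<not> (\<exists>x\<in>S. cluster_point T \<F> x)"
    let ?P = "\<lambda>D. \<exists>x\<in>S. cluster_on \<B> x D"
    have "\<exists>H\<in>sets M. ?P H \<and> (\<forall>D\<in>sets M. ?P D \<longrightarrow> D - H \<in> null_sets M)"
    proof (rule exists_ess_max_set)
      show "?P {}" using cluster_on_empty[OF \<B>(1)] stable_set_nonempty[OF stable_S] by blast
      fix D :: "nat \<Rightarrow> 'w set" assume D: "\<And>n. D n \<in> sets M" and P: "\<And>n. ?P (D n)"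
      then obtain x where "\<And>n. x n \<in> S" "\<And>n. cluster_on \<B> (x n) (D n)" by metis
      then show "?P (\<Union>n. D n)" by (rule exists_cluster_on_Union[OF \<B>(1) D])
    qed
    then obtain H where H: "H \<in> sets M" "?P H" "\<And>D. D \<in> sets M \<Longrightarrow> ?P D \<Longrightarrow> D - H \<in> null_sets M"
      by blast
    define Q where "Q = space M - H"
    have Q: "Q \<in> sets M" unfolding Q_def using H(1) by blast
    have Qn: "Q \<notin> null_sets M"
    proof
      assume "Q \<in> null_sets M"
      then show False
        using cluster_point_if_cluster_on_ae[OF \<B>(2) BE _ H(1)] H(2) no_cluster unfolding Q_def by blast
    qed
    have apart: "\<exists>U\<in>Bs. x \<in> U \<and> (\<exists>b\<in>\<B>. apart_on Q U b)" if x: "x \<in> S" for x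
    proof (rule exists_apart_nbhd[OF \<B>(1) Q x])
      fix Z assume "Z \<in> sets M" "Z \<subseteq> Q" "?P Z"
      moreover have "Z - H = Z" using \<open>Z \<subseteq> Q\<close> unfolding Q_def by blast
      ultimately show "Z \<in> null_sets M" using H(3) by metis
    qed
    define \<O> where "\<O> = {U \<in> Bs. \<exists>b\<in>\<B>. apart_on Q U b}"
    have "stable_coll M E smul \<O>"
      unfolding \<O>_def
      by (rule stable_coll_apart_base[OF \<B>(1) Q])
         (use apart stable_set_nonempty[OF stable_S] in blast)
    moreover have "\<forall>V\<in>\<O>. openin T V" unfolding \<O>_def using base_open by blast
    moreover have "S = \<Union>\<O>" using apart base_subset_S unfolding \<O>_def by blast
    ultimately obtain \<O>' where \<O>': "stable_finite_sub M E smul \<O> \<O>'" "S = \<Union>\<O>'"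
      using cover by blast
    obtain A Os where d: "fin_sub_index \<O> A Os" and eq: "\<O>' = fin_sub A Os"
      by (rule stable_finite_sub_obtain[OF \<O>'(1)])
    have "\<not> S \<subseteq> \<Union>(fin_sub A Os)"
      by (rule not_covered_by_fin_sub_of_apart[OF F \<B> Q Qn _ d]) (simp add: \<O>_def)
    then show False using \<O>'(2) eq by blast
  qed
qed

lemma exists_apart_point_Union:
  fixes D :: "nat \<Rightarrow> 'w set"
  assumes D: "\<And>n. D n \<in> sets M" and V: "V \<subseteq> E" and apart: "\<And>n. \<exists>x\<in>S. apart_on (D n) {x} V"
  shows "\<exists>x\<in>S. apart_on (\<Union>n. D n) {x} V"
proof -
  obtain x where x: "\<And>n. x n \<in> S" "\<And>n. apart_on (D n) {x n} V" using apart by metis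
  have glued: "apart_on (\<Union>n. D n) (conc_sets E smul (seq_partition D) (\<lambda>m. {x (m - 1)}))
          (conc_sets E smul (seq_partition D) (\<lambda>m. V))"
    by (rule apart_on_Union_seq[OF D _ _ x(2)]) (use x(1) S_subset_carrier V in auto)
  have "seq_glue D x \<in> conc_sets E smul (seq_partition D) (\<lambda>m. {x (m - 1)})"
    by (rule seq_glue_mem_conc_sets) simp
  moreover have "V \<subseteq> conc_sets E smul (seq_partition D) (\<lambda>m. V)"
    by (rule subset_conc_sets_const[OF V meas_partition_seq_partition[OF D]])
  ultimately have "apart_on (\<Union>n. D n) {seq_glue D x} V"
    by (intro apart_on_mono[OF glued]) auto
  moreover have "seq_glue D x \<in> S" by (rule seq_glue_mem[OF stable_S D x(1)])
  ultimately show ?thesis by blast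
qed

definition fin_covers_on :: "'e set set \<Rightarrow> 'w set \<Rightarrow> bool" where
  "fin_covers_on \<O> D \<longleftrightarrow>
     (\<exists>A Os. fin_sub_index \<O> A Os \<and> (\<forall>x\<in>S. \<exists>W\<in>fin_sub A Os. meets_on D {x} W))"

definition apart_points :: "'w set \<Rightarrow> (nat \<Rightarrow> 'w set) \<Rightarrow> (nat \<Rightarrow> 'e set set) \<Rightarrow> 'e set" where
  "apart_points Q A Os = {x \<in> S. apart_on Q {x} (\<Union>(fin_sub A Os))}"

lemma apart_points_antimono:
  assumes sub: "fin_sub A1 Os1 \<subseteq> fin_sub A2 Os2"
  shows "apart_points Q A2 Os2 \<subseteq> apart_points Q A1 Os1"
proof
  fix x assume "x \<in> apart_points Q A2 Os2"
  then have x: "x \<in> S" "apart_on Q {x} (\<Union>(fin_sub A2 Os2))" unfolding apart_points_def by blast+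
  have "apart_on Q {x} (\<Union>(fin_sub A1 Os1))" by (rule apart_on_mono[OF x(2)]) (use sub in blast)+
  then show "x \<in> apart_points Q A1 Os1" using x(1) unfolding apart_points_def by blast
qed

context
  fixes \<O> :: "'e set set"
  assumes \<O>: "stable_coll M E smul \<O>"
begin

lemma fin_sub_Union_subset_carrier: "fin_sub_index \<O> A Os \<Longrightarrow> \<Union>(fin_sub A Os) \<subseteq> E"
  using fin_sub_subset[OF \<O>] stable_coll_stable_set[OF \<O>] stable_set_subset by blast

lemma fin_covers_on_Union:
  fixes D :: "nat \<Rightarrow> 'w set"
  assumes D: "\<And>n. D n \<in> sets M" and covers: "\<And>n. fin_covers_on \<O> (D n)"
  shows "fin_covers_on \<O> (\<Union>n. D n)"
proof -
  obtain A Os where d: "\<And>n. fin_sub_index \<O> (A n) (Os n)"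
    and c: "\<And>n x. x \<in> S \<Longrightarrow> \<exists>W\<in>fin_sub (A n) (Os n). meets_on (D n) {x} W"
    using covers unfolding fin_covers_on_def by metis
  have P: "meas_partition M (seq_partition D)" by (rule meas_partition_seq_partition[OF D])
  obtain A' Os' where d': "fin_sub_index \<O> A' Os'" and comb: "\<And>W. (\<And>m. W m \<in> fin_sub (A (m - 1)) (Os (m - 1))) \<Longrightarrow>
      conc_sets E smul (seq_partition D) W \<in> fin_sub A' Os'"
    using fin_sub_combine[where A="\<lambda>m. A (m - 1)" and Os="\<lambda>m. Os (m - 1)", OF \<O> P d] by blast
  have "\<exists>W\<in>fin_sub A' Os'. meets_on (\<Union>n. D n) {x} W" if x: "x \<in> S" for x
  proof -
    have xE: "x \<in> E" using x S_subset_carrier by blast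
    have "\<forall>n. \<exists>W w. W \<in> fin_sub (A n) (Os n) \<and> w \<in> W \<and> agree_on (D n) x w"
      using c[OF x] unfolding meets_on_def by blast
    then obtain Ws ws where Ws: "\<And>n. Ws n \<in> fin_sub (A n) (Os n)" "\<And>n. ws n \<in> Ws n"
      and agree: "\<And>n. agree_on (D n) x (ws n)"
      by metis
    have wsE: "\<And>n. ws n \<in> E" using Ws fin_sub_Union_subset_carrier[OF d] by blast
    have "conc_sets E smul (seq_partition D) (\<lambda>m. Ws (m - 1)) \<in> fin_sub A' Os'"
      by (rule comb) (rule Ws(1))
    moreover have "seq_glue D ws \<in> conc_sets E smul (seq_partition D) (\<lambda>m. Ws (m - 1))"
      by (rule seq_glue_mem_conc_sets) (rule Ws(2))
    moreover have "agree_on (\<Union>n. D n) x (seq_glue D ws)"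
      by (rule agree_on_Union_seq_glue_const[OF D xE wsE agree])
    ultimately show ?thesis unfolding meets_on_def by blast
  qed
  then show ?thesis unfolding fin_covers_on_def using d' by blast
qed

lemma fin_covers_on_empty: "fin_covers_on \<O> {}"
proof -
  obtain V where V: "V \<in> \<O>" using stable_coll_nonempty[OF \<O>] by blast
  have P: "meas_partition M (bipartition {})" by (rule meas_partition_bipartition) simp
  have "meets_on {} {x} V" if "x \<in> S" for x
    by (rule meets_on_empty)
      (use that S_subset_carrier stable_coll_stable_set[OF \<O> V] stable_set_nonempty stable_set_subset in auto)
  then show ?thesis
    unfolding fin_covers_on_def using fin_sub_index_const[OF \<O> P V] fin_sub_const[OF \<O> P V] by blast
qed

lemma apart_points_nonempty:
  assumes Q: "Q \<in> sets M" and d: "fin_sub_index \<O> A Os"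
    and no_cover: "\<And>Z. Z \<in> sets M \<Longrightarrow> Z \<subseteq> Q \<Longrightarrow> fin_covers_on \<O> Z \<Longrightarrow> Z \<in> null_sets M"
  shows "apart_points Q A Os \<noteq> {}"
proof -
  let ?W = "\<Union>(fin_sub A Os)"
  have WE: "?W \<subseteq> E" by (rule fin_sub_Union_subset_carrier[OF d])
  have sc: "stable_coll M E smul (fin_sub A Os)" by (rule stable_coll_fin_sub[OF \<O> d])
  let ?P = "\<lambda>D. \<exists>x\<in>S. apart_on D {x} ?W"
  have dichotomy: "?P Q \<or> (\<exists>Z\<in>sets M. Z \<subseteq> Q \<and> Z \<notin> null_sets M \<and>
                      (\<forall>D\<in>sets M. D \<subseteq> Z \<longrightarrow> ?P D \<longrightarrow> D \<in> null_sets M))"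
  proof (rule ess_local_dichotomy[OF _ _ _ Q])
    show "?P {}" using apart_on_empty stable_set_nonempty[OF stable_S] by blast
    show "?P (\<Union>n. D n)" if "\<And>n. D n \<in> sets M" "\<And>n. ?P (D n)" for D :: "nat \<Rightarrow> 'w set"
      by (rule exists_apart_point_Union[OF that(1) WE that(2)])
  next
    fix D D' assume "D \<in> sets M" "D' \<in> sets M" "?P D" "D' - D \<in> null_sets M"
    then show "?P D'" using apart_on_ae_superset WE S_subset_carrier by (meson empty_subsetI insert_subset subsetD)
  qed
  show ?thesis
  proof (cases "?P Q")
    case True
    then show ?thesis unfolding apart_points_def by blast
  next
    case False
    then obtain Z where Z: "Z \<in> sets M" "Z \<subseteq> Q" "Z \<notin> null_sets M"
      and noP: "\<forall>D\<in>sets M. D \<subseteq> Z \<longrightarrow> ?P D \<longrightarrow> D \<in> null_sets M"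
      using dichotomy by blast
    have "\<exists>W\<in>fin_sub A Os. meets_on Z {x} W" if x: "x \<in> S" for x
    proof (rule ccontr)
      assume "\<not> (\<exists>W\<in>fin_sub A Os. meets_on Z {x} W)"
      moreover have "stable_set M E smul {x}" by (rule stable_set_singleton) (use x S_subset_carrier in blast)
      ultimately obtain Z' where "Z' \<in> sets M" "Z' \<subseteq> Z" "Z' \<notin> null_sets M" "apart_on Z' {x} ?W"
        using meets_on_or_apart_on_piece[OF _ sc Z(1)] by blast
      then show False using noP x by blast
    qed
    then have "fin_covers_on \<O> Z" unfolding fin_covers_on_def using d by blast
    then show ?thesis using no_cover[OF Z(1,2)] Z(3) by blast
  qed
qed

lemma stable_set_apart_points:
  assumes Q: "Q \<in> sets M" and d: "fin_sub_index \<O> A Os" and ne: "apart_points Q A Os \<noteq> {}"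
  shows "stable_set M E smul (apart_points Q A Os)"
proof -
  let ?W = "\<Union>(fin_sub A Os)"
  have WE: "?W \<subseteq> E" by (rule fin_sub_Union_subset_carrier[OF d])
  have "conc E smul B xs \<in> apart_points Q A Os"
    if B: "meas_partition M B" and xs: "\<And>n. xs n \<in> apart_points Q A Os" for B xs
  proof -
    have xsS: "\<And>n. xs n \<in> S" using xs unfolding apart_points_def by blast
    have glued: "apart_on Q (conc_sets E smul B (\<lambda>n. {xs n})) (conc_sets E smul B (\<lambda>_. ?W))"
    proof (rule apart_on_conc_sets[OF B Q])
      show "{xs n} \<subseteq> E" for n using xsS S_subset_carrier by blast
      have "apart_on Q {xs n} ?W" for n using xs[of n] unfolding apart_points_def by blast
      then show "apart_on (Q \<inter> B n) {xs n} ?W" for n by (rule apart_on_mono) auto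
    qed (rule WE)
    have "conc E smul B xs \<in> conc_sets E smul B (\<lambda>n. {xs n})" by (rule conc_mem_conc_sets) simp
    then have "apart_on Q {conc E smul B xs} ?W"
      by (intro apart_on_mono[OF glued subset_refl _ subset_conc_sets_const[OF WE B]]) simp
    moreover have "conc E smul B xs \<in> S" by (rule stable_set_conc[OF stable_S B xsS])
    ultimately show ?thesis unfolding apart_points_def by blast
  qed
  then show ?thesis
    unfolding stable_set_def using ne S_subset_carrier unfolding apart_points_def by blast
qed

lemma apart_points_conc:
  assumes Q: "Q \<in> sets M" and B: "meas_partition M B"
    and d: "\<And>n. fin_sub_index \<O> (A n) (Os n)" and ne: "\<And>n. apart_points Q (A n) (Os n) \<noteq> {}"
  obtains A' Os' where "fin_sub_index \<O> A' Os'"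
    and "apart_points Q A' Os' \<subseteq> conc_sets E smul B (\<lambda>n. apart_points Q (A n) (Os n))"
proof -
  obtain A' Os' where d': "fin_sub_index \<O> A' Os'"
    and comb: "\<And>W. (\<And>n. W n \<in> fin_sub (A n) (Os n)) \<Longrightarrow> conc_sets E smul B W \<in> fin_sub A' Os'"
    using fin_sub_combine[where A=A and Os=Os, OF \<O> B d] by blast
  have sc: "\<And>n. stable_coll M E smul (fin_sub (A n) (Os n))" by (rule stable_coll_fin_sub[OF \<O> d])
  have NE: "\<And>n. apart_points Q (A n) (Os n) \<subseteq> E"
    using S_subset_carrier unfolding apart_points_def by blast
  have "apart_points Q A' Os' \<subseteq> conc_sets E smul B (\<lambda>n. apart_points Q (A n) (Os n))"
  proof
    fix z assume z: "z \<in> apart_points Q A' Os'"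
    have zS: "z \<in> S" using z unfolding apart_points_def by blast
    have "\<exists>y\<in>apart_points Q (A n) (Os n). agree_on (B n) z y" for n
    proof -
      have Bn: "B n \<in> sets M" by (rule meas_partition_sets[OF B])
      obtain p where p: "p \<in> apart_points Q (A n) (Os n)" using ne by blast
      have pS: "p \<in> S" using p unfolding apart_points_def by blast
      have E: "z \<in> E" "p \<in> E" using zS pS S_subset_carrier by blast+
      have "\<forall>w\<in>\<Union>(fin_sub (A n) (Os n)). \<exists>w'\<in>\<Union>(fin_sub A' Os'). agree_on (B n) w w'"
      proof
        fix w assume "w \<in> \<Union>(fin_sub (A n) (Os n))"
        then obtain W where W: "W \<in> fin_sub (A n) (Os n)" "w \<in> W" by blast
        obtain Wf w' where Wf: "\<And>m. Wf m \<in> fin_sub (A m) (Os m)"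
          and w': "w' \<in> conc_sets E smul B Wf" "agree_on (B n) w w'"
          using exists_conc_sets_agree[where \<W>="\<lambda>m. fin_sub (A m) (Os m)", OF B sc W] by blast
        then show "\<exists>w'\<in>\<Union>(fin_sub A' Os'). agree_on (B n) w w'" using comb[OF Wf] by blast
      qed
      then have "apart_on Q {paste (B n) z p} (\<Union>(fin_sub (A n) (Os n)))"
        using apart_on_paste[OF Q Bn E fin_sub_Union_subset_carrier[OF d] fin_sub_Union_subset_carrier[OF d']]
          z p unfolding apart_points_def by blast
      then have "paste (B n) z p \<in> apart_points Q (A n) (Os n)"
        using paste_mem_S[OF Bn zS pS] unfolding apart_points_def by blast
      then show ?thesis using agree_on_paste_inside[OF Bn E(1,2)] agree_on_commute by blast
    qed
    then show "z \<in> conc_sets E smul B (\<lambda>n. apart_points Q (A n) (Os n))"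
      unfolding mem_conc_sets[OF B NE] using zS S_subset_carrier by blast
  qed
  then show ?thesis using d' that by blast
qed

end

lemma fin_sub_cover_if_fin_covers_on_ae:
  assumes \<O>: "stable_coll M E smul \<O>" and H: "H \<in> sets M" "space M - H \<in> null_sets M"
    and covers: "fin_covers_on \<O> H"
  obtains A Os where "fin_sub_index \<O> A Os" and "S \<subseteq> \<Union>(fin_sub A Os)"
proof -
  obtain A Os where d: "fin_sub_index \<O> A Os" and c: "\<forall>x\<in>S. \<exists>W\<in>fin_sub A Os. meets_on H {x} W"
    using covers unfolding fin_covers_on_def by blast
  have "x \<in> \<Union>(fin_sub A Os)" if x: "x \<in> S" for x
  proof -
    obtain W w where W: "W \<in> fin_sub A Os" "w \<in> W" "agree_on H x w"
      using c x unfolding meets_on_def by blast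
    have "x = w"
      by (rule eq_if_agree_on_ae[OF W(3) H])
        (use x S_subset_carrier W fin_sub_Union_subset_carrier[OF \<O> d] in auto)
    then show ?thesis using W by blast
  qed
  then show ?thesis using that d by blast
qed

lemma open_cover_if_stable_compact:
  assumes compact: "stable_compact M E smul T S"
    and \<O>: "stable_coll M E smul \<O>" and open_\<O>: "\<forall>V\<in>\<O>. openin T V" and cover: "S = \<Union>\<O>"
  shows "\<exists>\<O>'. stable_finite_sub M E smul \<O> \<O>' \<and> S = \<Union>\<O>'"
proof (rule ccontr)
  assume none: "\<not> (\<exists>\<O>'. stable_finite_sub M E smul \<O> \<O>' \<and> S = \<Union>\<O>')"
  have "\<exists>H\<in>sets M. fin_covers_on \<O> H \<and> (\<forall>D\<in>sets M. fin_covers_on \<O> D \<longrightarrow> D - H \<in> null_sets M)"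
    by (rule exists_ess_max_set[OF fin_covers_on_empty[OF \<O>] fin_covers_on_Union[OF \<O>]])
  then obtain H where H: "H \<in> sets M" "fin_covers_on \<O> H"
    "\<And>D. D \<in> sets M \<Longrightarrow> fin_covers_on \<O> D \<Longrightarrow> D - H \<in> null_sets M" by blast
  define Q where "Q = space M - H"
  have Q: "Q \<in> sets M" unfolding Q_def using H(1) by blast
  have Qn: "Q \<notin> null_sets M"
  proof
    assume "Q \<in> null_sets M"
    then obtain A Os where d: "fin_sub_index \<O> A Os" and "S \<subseteq> \<Union>(fin_sub A Os)"
      using fin_sub_cover_if_fin_covers_on_ae[OF \<O> H(1) _ H(2)] unfolding Q_def by blast
    then show False
      using none stable_finite_sub_fin_sub[OF \<O> d] fin_sub_subset[OF \<O> d] cover by blast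
  qed
  have no_cover: "Z \<in> null_sets M" if "Z \<in> sets M" "Z \<subseteq> Q" "fin_covers_on \<O> Z" for Z
  proof -
    have "Z - H = Z" using that(2) unfolding Q_def by blast
    then show ?thesis using H(3)[OF that(1,3)] by simp
  qed
  have ne: "apart_points Q A Os \<noteq> {}" if "fin_sub_index \<O> A Os" for A Os
    by (rule apart_points_nonempty[OF \<O> Q that no_cover])
  let ?\<G> = "{apart_points Q A Os | A Os. fin_sub_index \<O> A Os}"
  have "stable_filter M E smul S (filter_generated S ?\<G>)"
  proof (rule stable_filter_fin_sub_family[OF stable_S \<O>])
    show "stable_set M E smul (apart_points Q A Os) \<and> apart_points Q A Os \<subseteq> S"
      if d: "fin_sub_index \<O> A Os" for A Os
      using stable_set_apart_points[OF \<O> Q d ne[OF d]] unfolding apart_points_def by blast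
    show "apart_points Q A2 Os2 \<subseteq> apart_points Q A1 Os1" if "fin_sub A1 Os1 \<subseteq> fin_sub A2 Os2"
      for A1 Os1 A2 Os2 by (rule apart_points_antimono[OF that])
    fix B :: "nat \<Rightarrow> 'w set" and A :: "nat \<Rightarrow> nat \<Rightarrow> 'w set" and Os :: "nat \<Rightarrow> nat \<Rightarrow> 'e set set"
    assume "meas_partition M B" and d: "\<And>n. fin_sub_index \<O> (A n) (Os n)"
    then show "\<exists>A' Os'. fin_sub_index \<O> A' Os' \<and>
        apart_points Q A' Os' \<subseteq> conc_sets E smul B (\<lambda>n. apart_points Q (A n) (Os n))"
      using apart_points_conc[where A=A and Os=Os, OF \<O> Q _ d ne[OF d]] by blast
  qed
  then obtain x where x: "x \<in> S" "cluster_point T (filter_generated S ?\<G>) x"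
    using compact unfolding stable_compact_def by blast
  obtain V where V: "V \<in> \<O>" "x \<in> V" using x(1) cover by blast
  have P: "meas_partition M (bipartition {})" by (rule meas_partition_bipartition) simp
  have "apart_points Q (bipartition {}) (\<lambda>_. {V}) \<in> filter_generated S ?\<G>"
    unfolding filter_generated_def apart_points_def using fin_sub_index_const[OF \<O> P V(1)] by blast
  then obtain y where y: "y \<in> V" "y \<in> apart_points Q (bipartition {}) (\<lambda>_. {V})"
    using x(2) V open_\<O> unfolding cluster_point_def by blast
  have "apart_on Q {y} V" using y(2) fin_sub_const[OF \<O> P V(1)] unfolding apart_points_def by simp
  then show False using null_if_apart_on_self[OF _ Q _ y(1)] Qn by blast
qed

end

theorem proposition5:
  fixes M :: "'w measure" and E :: "'e set" and zero :: 'e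
    and add :: "'e \<Rightarrow> 'e \<Rightarrow> 'e" and smul :: "('w \<Rightarrow> real) \<Rightarrow> 'e \<Rightarrow> 'e"
    and S :: "'e set" and T :: "'e topology"
  assumes "prob_space M"
    and "stable_module M E zero add smul"
    and "stable_set M E smul S"
    and "topspace T = S"
    and "stable_topology M E smul T"
  shows "(stable_compact M E smul T S \<longleftrightarrow>
            (\<forall>\<F>. stable_ultrafilter M E smul S \<F> \<longrightarrow> (\<exists>x\<in>S. cluster_point T \<F> x)))
       \<and> (stable_compact M E smul T S \<longleftrightarrow>
            (\<forall>\<O>. stable_coll M E smul \<O> \<and> (\<forall>V\<in>\<O>. openin T V) \<and> S = \<Union>\<O> \<longrightarrow>
               (\<exists>\<O>'. stable_finite_sub M E smul \<O> \<O>' \<and> S = \<Union>\<O>')))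
       \<and> (stable_compact M E smul T S \<longleftrightarrow>
            (\<forall>\<C>. stable_coll M E smul \<C> \<and> (\<forall>C\<in>\<C>. closedin T C) \<and>
                  (\<forall>\<C>'. stable_finite_sub M E smul \<C> \<C>' \<longrightarrow> \<Inter>\<C>' \<noteq> {}) \<longrightarrow>
               \<Inter>\<C> \<noteq> {}))"
proof -
  obtain Bs where Bs: "stable_coll M E smul Bs" "\<forall>B\<in>Bs. openin T B"
    "\<forall>U. openin T U \<longrightarrow> (\<exists>\<U>\<subseteq>Bs. U = \<Union>\<U>)"
    using assms(5) unfolding stable_topology_def by blast
  interpret stable_top_subset M E zero add smul S T Bs
    by (intro stable_top_subset.intro stable_L0_module.intro stable_L0_module_axioms.intro
        stable_top_subset_axioms.intro assms Bs(1)) (use Bs in auto)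
  have "stable_compact M E smul T S \<longleftrightarrow>
          (\<forall>\<F>. stable_ultrafilter M E smul S \<F> \<longrightarrow> (\<exists>x\<in>S. cluster_point T \<F> x))"
    using exists_stable_ultrafilter_superset[OF stable_S] cluster_point_antimono
    unfolding stable_compact_def stable_ultrafilter_def by meson
  moreover have "stable_compact M E smul T S \<longleftrightarrow>
          (\<forall>\<O>. stable_coll M E smul \<O> \<and> (\<forall>V\<in>\<O>. openin T V) \<and> S = \<Union>\<O> \<longrightarrow>
             (\<exists>\<O>'. stable_finite_sub M E smul \<O> \<O>' \<and> S = \<Union>\<O>'))"
    using open_cover_if_stable_compact stable_compact_if_open_cover by blast
  moreover have "stable_compact M E smul T S \<longleftrightarrow>
          (\<forall>\<C>. stable_coll M E smul \<C> \<and> (\<forall>C\<in>\<C>. closedin T C) \<and>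
                (\<forall>\<C>'. stable_finite_sub M E smul \<C> \<C>' \<longrightarrow> \<Inter>\<C>' \<noteq> {}) \<longrightarrow> \<Inter>\<C> \<noteq> {})"
    using closed_fip_if_stable_compact stable_compact_if_closed_fip by blast
  ultimately show ?thesis by blast
qed

end
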